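(* Let $\mathfrak g=\mathfrak g_{-1}\oplus\mathfrak g_0\oplus\mathfrak g_1$ be a complex Lie superalgebra with $\dim\mathfrak g_{\bar1}<\infty$ and compatible $\mathbb Z$-grading, and let $V$ be a simple $\mathfrak g_0$-supermodule. Then both $\mathrm{Coind}_{\mathfrak g_{\geq0}}^{\mathfrak g}(V)$ and $\mathrm{Coind}_{\mathfrak g_{\leq0}}^{\mathfrak g}(V)$ have simple socle.
   Context: Compatible grading: $\mathfrak g_0=\mathfrak g_{\bar0}$, $\mathfrak g_{\bar1}=\mathfrak g_{-1}\oplus\mathfrak g_1$, $\mathfrak g_{\pm1}$ $\mathfrak g_0$-submodules, $[\mathfrak g_{\pm1},\mathfrak g_{\pm1}]=0$; $\mathfrak g_{\geq0}=\mathfrak g_0\oplus\mathfrak g_1$, $\mathfrak g_{\leq0}=\mathfrak g_0\oplus\mathfrak g_{-1}$. $\mathrm{Coind}_{\mathfrak g_{\geq0}}^{\mathfrak g}(V)=\{f\in\mathrm{Hom}_{\mathbb C}(U(\mathfrak g),V)\mid f(pu)=pf(u)\ \forall p\in U(\mathfrak g_{\geq0})\}$ with $(xf)(u)=f(ux)$, where $\mathfrak g_1$ acts on $V$ by zero; $\mathrm{Coind}_{\mathfrak g_{\leq0}}^{\mathfrak g}(V)$ analogously with $\mathfrak g_{-1}$ acting by zero. *)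

theory Defs
  imports Complex_Main
begin

(* A complex Lie superalgebra g (= the whole type 'g, with complex scalar
   multiplication sc and bracket br) with a compatible Z-grading
   g = Gm (+) G0 (+) Gp, where Gm = g_{-1}, G0 = g_0 = g_even, Gp = g_1. *)

definition Godd :: "'g::ab_group_add set \<Rightarrow> 'g set \<Rightarrow> 'g set" where
  "Godd Gm Gp = {a + b | a b. a \<in> Gm \<and> b \<in> Gp}"

definition homog :: "'g::ab_group_add set \<Rightarrow> 'g set \<Rightarrow> 'g set \<Rightarrow> 'g \<Rightarrow> bool" where
  "homog G0 Gm Gp x \<longleftrightarrow> x \<in> G0 \<or> x \<in> Godd Gm Gp"

definition ssign :: "'g set \<Rightarrow> 'g \<Rightarrow> 'g \<Rightarrow> complex" where
  "ssign G0 x y = (if x \<notin> G0 \<and> y \<notin> G0 then -1 else 1)"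

definition Zgraded_lie_superalgebra ::
  "(complex \<Rightarrow> 'g::ab_group_add \<Rightarrow> 'g) \<Rightarrow> ('g \<Rightarrow> 'g \<Rightarrow> 'g) \<Rightarrow> 'g set \<Rightarrow> 'g set \<Rightarrow> 'g set \<Rightarrow> bool"
where
  "Zgraded_lie_superalgebra sc br Gm G0 Gp \<longleftrightarrow>
     vector_space sc \<and>
     module.subspace sc Gm \<and> module.subspace sc G0 \<and> module.subspace sc Gp \<and>
     (\<forall>x. \<exists>!t. fst t \<in> Gm \<and> fst (snd t) \<in> G0 \<and> snd (snd t) \<in> Gp \<and>
              x = fst t + fst (snd t) + snd (snd t)) \<and>
     \<comment> \<open>bilinearity of the bracket\<close>
     (\<forall>x y z. br (x + y) z = br x z + br y z) \<and>
     (\<forall>x y z. br x (y + z) = br x y + br x z) \<and>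
     (\<forall>a x y. br (sc a x) y = sc a (br x y)) \<and>
     (\<forall>a x y. br x (sc a y) = sc a (br x y)) \<and>
     \<comment> \<open>compatible Z-grading: [g_i, g_j] \<subseteq> g_{i+j}, g_k = 0 for |k| \<ge> 2\<close>
     (\<forall>x\<in>G0. \<forall>y\<in>G0. br x y \<in> G0) \<and>
     (\<forall>x\<in>G0. \<forall>y\<in>Gm. br x y \<in> Gm \<and> br y x \<in> Gm) \<and>
     (\<forall>x\<in>G0. \<forall>y\<in>Gp. br x y \<in> Gp \<and> br y x \<in> Gp) \<and>
     (\<forall>x\<in>Gm. \<forall>y\<in>Gp. br x y \<in> G0 \<and> br y x \<in> G0) \<and>
     (\<forall>x\<in>Gm. \<forall>y\<in>Gm. br x y = 0) \<and>
     (\<forall>x\<in>Gp. \<forall>y\<in>Gp. br x y = 0) \<and>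
     \<comment> \<open>super antisymmetry and super Jacobi identity for homogeneous elements\<close>
     (\<forall>x y. homog G0 Gm Gp x \<longrightarrow> homog G0 Gm Gp y \<longrightarrow>
        br x y = - sc (ssign G0 x y) (br y x)) \<and>
     (\<forall>x y z. homog G0 Gm Gp x \<longrightarrow> homog G0 Gm Gp y \<longrightarrow> homog G0 Gm Gp z \<longrightarrow>
        br x (br y z) = br (br x y) z + sc (ssign G0 x y) (br y (br x z)))"

definition odd_part_finite_dim :: "(complex \<Rightarrow> 'g::ab_group_add \<Rightarrow> 'g) \<Rightarrow> 'g set \<Rightarrow> 'g set \<Rightarrow> bool" where
  "odd_part_finite_dim sc Gm Gp \<longleftrightarrow> (\<exists>B. finite B \<and> Godd Gm Gp \<subseteq> module.span sc B)"

(* V = the whole type 'v, complex scalar multiplication scV, V = V0 (+) V1,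
   G0-action rho (only its values on G0 matter). *)
definition g0_supermodule ::
  "(complex \<Rightarrow> 'g::ab_group_add \<Rightarrow> 'g) \<Rightarrow> ('g \<Rightarrow> 'g \<Rightarrow> 'g) \<Rightarrow> 'g set \<Rightarrow>
   (complex \<Rightarrow> 'v::ab_group_add \<Rightarrow> 'v) \<Rightarrow> 'v set \<Rightarrow> 'v set \<Rightarrow> ('g \<Rightarrow> 'v \<Rightarrow> 'v) \<Rightarrow> bool"
where
  "g0_supermodule sc br G0 scV V0 V1 rho \<longleftrightarrow>
     vector_space scV \<and> module.subspace scV V0 \<and> module.subspace scV V1 \<and>
     (\<forall>v. \<exists>!p. fst p \<in> V0 \<and> snd p \<in> V1 \<and> v = fst p + snd p) \<and>
     (\<forall>x\<in>G0. \<forall>v w. rho x (v + w) = rho x v + rho x w) \<and>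
     (\<forall>x\<in>G0. \<forall>a v. rho x (scV a v) = scV a (rho x v)) \<and>
     (\<forall>x\<in>G0. \<forall>y\<in>G0. \<forall>v. rho (x + y) v = rho x v + rho y v) \<and>
     (\<forall>x\<in>G0. \<forall>a v. rho (sc a x) v = scV a (rho x v)) \<and>
     (\<forall>x\<in>G0. \<forall>y\<in>G0. \<forall>v. rho (br x y) v = rho x (rho y v) - rho y (rho x v)) \<and>
     (\<forall>x\<in>G0. \<forall>v\<in>V0. rho x v \<in> V0) \<and>
     (\<forall>x\<in>G0. \<forall>v\<in>V1. rho x v \<in> V1)"

definition simple_g0_supermodule ::
  "(complex \<Rightarrow> 'g::ab_group_add \<Rightarrow> 'g) \<Rightarrow> ('g \<Rightarrow> 'g \<Rightarrow> 'g) \<Rightarrow> 'g set \<Rightarrow>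
   (complex \<Rightarrow> 'v::ab_group_add \<Rightarrow> 'v) \<Rightarrow> 'v set \<Rightarrow> 'v set \<Rightarrow> ('g \<Rightarrow> 'v \<Rightarrow> 'v) \<Rightarrow> bool"
where
  "simple_g0_supermodule sc br G0 scV V0 V1 rho \<longleftrightarrow>
     g0_supermodule sc br G0 scV V0 V1 rho \<and> (\<exists>v::'v. v \<noteq> 0) \<and>
     (\<forall>W. module.subspace scV W \<and> (\<forall>x\<in>G0. \<forall>w\<in>W. rho x w \<in> W) \<and>
          (\<forall>w\<in>W. \<exists>a b. a \<in> W \<inter> V0 \<and> b \<in> W \<inter> V1 \<and> w = a + b)
        \<longrightarrow> W = {0} \<or> W = UNIV)"

(* Hom_C(U(g), V): a linear map U(g) \<rightarrow> V is the same as a function f on words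
   (elements of T(g) = tensor algebra), multilinear in each letter, and vanishing on
   the two-sided ideal generated by xy - (-1)^{|x||y|} yx - [x,y]. *)
definition hom_Ug ::
  "(complex \<Rightarrow> 'g::ab_group_add \<Rightarrow> 'g) \<Rightarrow> ('g \<Rightarrow> 'g \<Rightarrow> 'g) \<Rightarrow> 'g set \<Rightarrow> 'g set \<Rightarrow> 'g set \<Rightarrow>
   (complex \<Rightarrow> 'v::ab_group_add \<Rightarrow> 'v) \<Rightarrow> ('g list \<Rightarrow> 'v) \<Rightarrow> bool"
where
  "hom_Ug sc br Gm G0 Gp scV f \<longleftrightarrow>
     (\<forall>u w x y. f (u @ [x + y] @ w) = f (u @ [x] @ w) + f (u @ [y] @ w)) \<and>
     (\<forall>u w a x. f (u @ [sc a x] @ w) = scV a (f (u @ [x] @ w))) \<and>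
     (\<forall>u w x y. homog G0 Gm Gp x \<longrightarrow> homog G0 Gm Gp y \<longrightarrow>
        f (u @ [x, y] @ w) = scV (ssign G0 x y) (f (u @ [y, x] @ w)) + f (u @ [br x y] @ w))"

definition wact :: "'g set \<Rightarrow> ('g \<Rightarrow> 'v::zero \<Rightarrow> 'v) \<Rightarrow> 'g list \<Rightarrow> 'v \<Rightarrow> 'v" where
  "wact G0 rho p v = foldr (\<lambda>x w. if x \<in> G0 then rho x w else 0) p v"

(* Coind_{g_0 + K}^g (V) with K (= g_1 or g_{-1}) acting by zero on V:
   f(p u) = p f(u) for p \<in> U(g_0 + K); U(g_0 + K) is spanned by words in G0 \<union> K. *)
definition Coind ::
  "(complex \<Rightarrow> 'g::ab_group_add \<Rightarrow> 'g) \<Rightarrow> ('g \<Rightarrow> 'g \<Rightarrow> 'g) \<Rightarrow> 'g set \<Rightarrow> 'g set \<Rightarrow> 'g set \<Rightarrow>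
   (complex \<Rightarrow> 'v::ab_group_add \<Rightarrow> 'v) \<Rightarrow> ('g \<Rightarrow> 'v \<Rightarrow> 'v) \<Rightarrow> 'g set \<Rightarrow> ('g list \<Rightarrow> 'v) set"
where
  "Coind sc br Gm G0 Gp scV rho K =
     {f. hom_Ug sc br Gm G0 Gp scV f \<and>
         (\<forall>p u. set p \<subseteq> G0 \<union> K \<longrightarrow> f (p @ u) = wact G0 rho p (f u))}"

definition gact :: "'g \<Rightarrow> ('g list \<Rightarrow> 'v) \<Rightarrow> ('g list \<Rightarrow> 'v)" where
  "gact x f = (\<lambda>u. f (u @ [x]))"

definition fsubspace :: "(complex \<Rightarrow> 'v::ab_group_add \<Rightarrow> 'v) \<Rightarrow> ('a \<Rightarrow> 'v) set \<Rightarrow> bool" where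
  "fsubspace scV W \<longleftrightarrow> (\<lambda>_. 0) \<in> W \<and> (\<forall>f\<in>W. \<forall>g\<in>W. (\<lambda>u. f u + g u) \<in> W) \<and>
                     (\<forall>a. \<forall>f\<in>W. (\<lambda>u. scV a (f u)) \<in> W)"

definition fspan :: "(complex \<Rightarrow> 'v::ab_group_add \<Rightarrow> 'v) \<Rightarrow> ('a \<Rightarrow> 'v) set \<Rightarrow> ('a \<Rightarrow> 'v) set" where
  "fspan scV A = \<Inter>{W. fsubspace scV W \<and> A \<subseteq> W}"

(* Z/2-grading on Hom_C(U(g),V): f has parity b iff it maps homogeneous words of
   parity c into V_{b+c} *)
definition word_odd :: "'g set \<Rightarrow> 'g list \<Rightarrow> bool" where
  "word_odd G0 u = odd (length (filter (\<lambda>x. x \<notin> G0) u))"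

definition has_parity ::
  "'g::ab_group_add set \<Rightarrow> 'g set \<Rightarrow> 'g set \<Rightarrow> 'v set \<Rightarrow> 'v set \<Rightarrow> bool \<Rightarrow> ('g list \<Rightarrow> 'v) \<Rightarrow> bool"
where
  "has_parity Gm G0 Gp V0 V1 b f \<longleftrightarrow>
     (\<forall>u. (\<forall>x\<in>set u. homog G0 Gm Gp x) \<longrightarrow> f u \<in> (if word_odd G0 u = b then V0 else V1))"

definition subsupermod ::
  "'g::ab_group_add set \<Rightarrow> 'g set \<Rightarrow> 'g set \<Rightarrow> (complex \<Rightarrow> 'v::ab_group_add \<Rightarrow> 'v) \<Rightarrow> 'v set \<Rightarrow> 'v set \<Rightarrow>
   ('g list \<Rightarrow> 'v) set \<Rightarrow> ('g list \<Rightarrow> 'v) set \<Rightarrow> bool"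
where
  "subsupermod Gm G0 Gp scV V0 V1 M W \<longleftrightarrow>
     W \<subseteq> M \<and> fsubspace scV W \<and> (\<forall>x. \<forall>f\<in>W. gact x f \<in> W) \<and>
     (\<forall>f\<in>W. \<exists>f0 f1. f0 \<in> W \<and> f1 \<in> W \<and> has_parity Gm G0 Gp V0 V1 False f0 \<and>
                   has_parity Gm G0 Gp V0 V1 True f1 \<and> f = (\<lambda>u. f0 u + f1 u))"

definition simple_subsupermod ::
  "'g::ab_group_add set \<Rightarrow> 'g set \<Rightarrow> 'g set \<Rightarrow> (complex \<Rightarrow> 'v::ab_group_add \<Rightarrow> 'v) \<Rightarrow> 'v set \<Rightarrow> 'v set \<Rightarrow>
   ('g list \<Rightarrow> 'v) set \<Rightarrow> ('g list \<Rightarrow> 'v) set \<Rightarrow> bool"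
where
  "simple_subsupermod Gm G0 Gp scV V0 V1 M S \<longleftrightarrow>
     subsupermod Gm G0 Gp scV V0 V1 M S \<and> S \<noteq> {\<lambda>_. 0} \<and>
     (\<forall>W. subsupermod Gm G0 Gp scV V0 V1 M W \<and> W \<subseteq> S \<longrightarrow> W = {\<lambda>_. 0} \<or> W = S)"

definition socle ::
  "'g::ab_group_add set \<Rightarrow> 'g set \<Rightarrow> 'g set \<Rightarrow> (complex \<Rightarrow> 'v::ab_group_add \<Rightarrow> 'v) \<Rightarrow> 'v set \<Rightarrow> 'v set \<Rightarrow>
   ('g list \<Rightarrow> 'v) set \<Rightarrow> ('g list \<Rightarrow> 'v) set"
where
  "socle Gm G0 Gp scV V0 V1 M = fspan scV (\<Union>{S. simple_subsupermod Gm G0 Gp scV V0 V1 M S})"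

definition has_simple_socle ::
  "'g::ab_group_add set \<Rightarrow> 'g set \<Rightarrow> 'g set \<Rightarrow> (complex \<Rightarrow> 'v::ab_group_add \<Rightarrow> 'v) \<Rightarrow> 'v set \<Rightarrow> 'v set \<Rightarrow>
   ('g list \<Rightarrow> 'v) set \<Rightarrow> bool"
where
  "has_simple_socle Gm G0 Gp scV V0 V1 M \<longleftrightarrow>
     simple_subsupermod Gm G0 Gp scV V0 V1 M (socle Gm G0 Gp scV V0 V1 M)"

end

theory Submission
  imports Defs
begin

text \<open>
  An element \<open>f\<close> of the coinduced module \<open>M\<close> is determined by its values on words in \<open>\<gg>\<^sub>-\<^sub>1\<close>:
  normal ordering in \<open>U(\<gg>)\<close> moves letters of \<open>\<gg>\<^sub>0 \<oplus> \<gg>\<^sub>1\<close> to the front, where they act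
  through \<open>\<rho>\<close> or by zero.  As \<open>\<gg>\<^sub>-\<^sub>1\<close> is odd and finite-dimensional, \<open>f\<close> vanishes on long
  such words, so applying to \<open>f \<noteq> 0\<close> a longest word with nonzero value yields a nonzero vector
  annihilated by \<open>\<gg>\<^sub>-\<^sub>1\<close>.  These invariants are determined by their value at the empty word,
  and every \<open>v \<in> V\<close> is such a value (realised through an explicit model of \<open>M\<close> as
  \<open>Hom(\<Lambda>(\<gg>\<^sub>-\<^sub>1), V)\<close>).  In a nonzero submodule the values of its invariants form a nonzero
  graded \<open>\<gg>\<^sub>0\<close>-submodule of \<open>V\<close>, hence all of \<open>V\<close>; so every nonzero submodule contains all
  invariants.  The intersection of all nonzero submodules is therefore nonzero, it is the unique
  simple submodule, and it is the socle.  For \<open>\<gg>\<^sub>\<le>\<^sub>0\<close> the roles of \<open>\<gg>\<^sub>1\<close> and \<open>\<gg>\<^sub>-\<^sub>1\<close> are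
  exchanged.
\<close>

locale coind_setting =
  fixes sc :: "complex \<Rightarrow> 'g::ab_group_add \<Rightarrow> 'g" and br :: "'g \<Rightarrow> 'g \<Rightarrow> 'g"
    and Gm G0 Gp :: "'g set"
    and scV :: "complex \<Rightarrow> 'v::ab_group_add \<Rightarrow> 'v" and V0 V1 :: "'v set"
    and rho :: "'g \<Rightarrow> 'v \<Rightarrow> 'v"
  assumes lie: "Zgraded_lie_superalgebra sc br Gm G0 Gp"
    and odd_fin: "odd_part_finite_dim sc Gm Gp"
    and simple_V: "simple_g0_supermodule sc br G0 scV V0 V1 rho"
begin

sublocale G: vector_space sc
  using lie by (simp add: Zgraded_lie_superalgebra_def)
sublocale V: vector_space scV
  using simple_V by (simp add: simple_g0_supermodule_def g0_supermodule_def)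

lemmas lie_axioms = lie[unfolded Zgraded_lie_superalgebra_def]

lemma subspace_Gm: "G.subspace Gm"
  using lie_axioms by (elim conjE) assumption

lemma subspace_G0: "G.subspace G0"
  using lie_axioms by (elim conjE) assumption

lemma subspace_Gp: "G.subspace Gp"
  using lie_axioms by (elim conjE) assumption

lemma grading_decomp: "\<exists>!t. fst t \<in> Gm \<and> fst (snd t) \<in> G0 \<and> snd (snd t) \<in> Gp \<and>
                           x = fst t + fst (snd t) + snd (snd t)"
  using lie_axioms by (elim conjE) (rule spec)

lemma br_add_left: "br (x + y) z = br x z + br y z"
  using lie_axioms by (elim conjE) blast

lemma br_add_right: "br x (y + z) = br x y + br x z"
  using lie_axioms by (elim conjE) blast

lemma br_scale_left: "br (sc a x) y = sc a (br x y)"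
  using lie_axioms by (elim conjE) blast

lemma br_scale_right: "br x (sc a y) = sc a (br x y)"
  using lie_axioms by (elim conjE) blast

lemma br_G0_G0: "x \<in> G0 \<Longrightarrow> y \<in> G0 \<Longrightarrow> br x y \<in> G0"
  using lie_axioms by (elim conjE) metis

lemma br_G0_Gm: "x \<in> G0 \<Longrightarrow> y \<in> Gm \<Longrightarrow> br x y \<in> Gm"
  using lie_axioms by (elim conjE) metis

lemma br_Gm_G0: "x \<in> G0 \<Longrightarrow> y \<in> Gm \<Longrightarrow> br y x \<in> Gm"
  using lie_axioms by (elim conjE) metis

lemma br_G0_Gp: "x \<in> G0 \<Longrightarrow> y \<in> Gp \<Longrightarrow> br x y \<in> Gp"
  using lie_axioms by (elim conjE) metis

lemma br_Gp_G0: "x \<in> G0 \<Longrightarrow> y \<in> Gp \<Longrightarrow> br y x \<in> Gp"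
  using lie_axioms by (elim conjE) metis

lemma br_Gm_Gp: "x \<in> Gm \<Longrightarrow> y \<in> Gp \<Longrightarrow> br x y \<in> G0"
  using lie_axioms by (elim conjE) metis

lemma br_Gp_Gm: "x \<in> Gm \<Longrightarrow> y \<in> Gp \<Longrightarrow> br y x \<in> G0"
  using lie_axioms by (elim conjE) metis

lemma br_Gm_Gm: "x \<in> Gm \<Longrightarrow> y \<in> Gm \<Longrightarrow> br x y = 0"
  using lie_axioms by (elim conjE) metis

lemma br_Gp_Gp: "x \<in> Gp \<Longrightarrow> y \<in> Gp \<Longrightarrow> br x y = 0"
  using lie_axioms by (elim conjE) metis

lemma br_super_antisym: "homog G0 Gm Gp x \<Longrightarrow> homog G0 Gm Gp y \<Longrightarrow>
        br x y = - sc (ssign G0 x y) (br y x)"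
  using lie_axioms by (elim conjE) metis

lemma br_super_jacobi: "homog G0 Gm Gp x \<Longrightarrow> homog G0 Gm Gp y \<Longrightarrow> homog G0 Gm Gp z \<Longrightarrow>
        br x (br y z) = br (br x y) z + sc (ssign G0 x y) (br y (br x z))"
  using lie_axioms by (elim conjE) fast

lemma br_zero_left [simp]: "br 0 y = 0"
  using br_scale_left[of 0 0 y] by simp

lemma br_zero_right [simp]: "br x 0 = 0"
  using br_scale_right[of x 0 0] by simp

lemma br_minus_left: "br (- x) y = - br x y"
  using br_scale_left[of "-1" x y] by simp

definition grading_triple :: "'g \<Rightarrow> 'g \<times> 'g \<times> 'g" where
  "grading_triple x = (THE t. fst t \<in> Gm \<and> fst (snd t) \<in> G0 \<and> snd (snd t) \<in> Gp \<and>
                              x = fst t + fst (snd t) + snd (snd t))"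

definition proj_m :: "'g \<Rightarrow> 'g" where "proj_m x = fst (grading_triple x)"
definition proj_0 :: "'g \<Rightarrow> 'g" where "proj_0 x = fst (snd (grading_triple x))"
definition proj_p :: "'g \<Rightarrow> 'g" where "proj_p x = snd (snd (grading_triple x))"

lemma proj_in: "proj_m x \<in> Gm" "proj_0 x \<in> G0" "proj_p x \<in> Gp"
  and proj_sum: "x = proj_m x + proj_0 x + proj_p x"
proof -
  have "fst (grading_triple x) \<in> Gm \<and> fst (snd (grading_triple x)) \<in> G0 \<and>
      snd (snd (grading_triple x)) \<in> Gp \<and>
      x = fst (grading_triple x) + fst (snd (grading_triple x)) + snd (snd (grading_triple x))"
    unfolding grading_triple_def by (rule theI'[OF grading_decomp])
  then show "proj_m x \<in> Gm" "proj_0 x \<in> G0" "proj_p x \<in> Gp" "x = proj_m x + proj_0 x + proj_p x"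
    by (auto simp: proj_m_def proj_0_def proj_p_def)
qed

lemma proj_unique:
  assumes "a \<in> Gm" "b \<in> G0" "c \<in> Gp" "x = a + b + c"
  shows "proj_m x = a" "proj_0 x = b" "proj_p x = c"
proof -
  have "grading_triple x = (a, b, c)"
    unfolding grading_triple_def by (rule the1_equality[OF grading_decomp]) (simp add: assms)
  then show "proj_m x = a" "proj_0 x = b" "proj_p x = c"
    by (simp_all add: proj_m_def proj_0_def proj_p_def)
qed

lemma proj_of_Gm: "x \<in> Gm \<Longrightarrow> proj_m x = x" "x \<in> Gm \<Longrightarrow> proj_0 x = 0" "x \<in> Gm \<Longrightarrow> proj_p x = 0"
  using proj_unique[of x 0 0 x] G.subspace_0[OF subspace_G0] G.subspace_0[OF subspace_Gp] by auto

lemma proj_of_G0: "x \<in> G0 \<Longrightarrow> proj_m x = 0" "x \<in> G0 \<Longrightarrow> proj_0 x = x" "x \<in> G0 \<Longrightarrow> proj_p x = 0"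
  using proj_unique[of 0 x 0 x] G.subspace_0[OF subspace_Gm] G.subspace_0[OF subspace_Gp] by auto

lemma proj_of_Gp: "x \<in> Gp \<Longrightarrow> proj_m x = 0" "x \<in> Gp \<Longrightarrow> proj_0 x = 0" "x \<in> Gp \<Longrightarrow> proj_p x = x"
  using proj_unique[of 0 0 x x] G.subspace_0[OF subspace_Gm] G.subspace_0[OF subspace_G0] by auto

lemma proj_linear:
  "proj_m (sc a x + sc b y) = sc a (proj_m x) + sc b (proj_m y)"
  "proj_0 (sc a x + sc b y) = sc a (proj_0 x) + sc b (proj_0 y)"
  "proj_p (sc a x + sc b y) = sc a (proj_p x) + sc b (proj_p y)"
proof -
  have "sc a (proj_m x) + sc b (proj_m y) \<in> Gm" "sc a (proj_0 x) + sc b (proj_0 y) \<in> G0"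
      "sc a (proj_p x) + sc b (proj_p y) \<in> Gp"
    using proj_in G.subspace_add G.subspace_scale subspace_Gm subspace_G0 subspace_Gp by blast+
  moreover have "sc a x + sc b y
      = (sc a (proj_m x) + sc b (proj_m y)) + (sc a (proj_0 x) + sc b (proj_0 y))
                          + (sc a (proj_p x) + sc b (proj_p y))"
    by (subst proj_sum[of x], subst proj_sum[of y]) (simp add: G.scale_right_distrib algebra_simps)
  ultimately show
    "proj_m (sc a x + sc b y) = sc a (proj_m x) + sc b (proj_m y)"
    "proj_0 (sc a x + sc b y) = sc a (proj_0 x) + sc b (proj_0 y)"
    "proj_p (sc a x + sc b y) = sc a (proj_p x) + sc b (proj_p y)"
    by (rule proj_unique)+
qed

lemma proj_add: "proj_m (x + y) = proj_m x + proj_m y" "proj_0 (x + y) = proj_0 x + proj_0 y"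
    "proj_p (x + y) = proj_p x + proj_p y"
  using proj_linear[of 1 x 1 y] by auto

lemma proj_scale: "proj_m (sc a x) = sc a (proj_m x)" "proj_0 (sc a x) = sc a (proj_0 x)"
    "proj_p (sc a x) = sc a (proj_p x)"
  using proj_linear[of a x 0 x] by auto

lemma proj_zero [simp]: "proj_m 0 = 0" "proj_0 0 = 0" "proj_p 0 = 0"
  using proj_of_Gm G.subspace_0[OF subspace_Gm] by auto

lemma proj_proj [simp]:
  "proj_m (proj_m x) = proj_m x" "proj_0 (proj_0 x) = proj_0 x" "proj_p (proj_p x) = proj_p x"
  "proj_0 (proj_m x) = 0" "proj_p (proj_m x) = 0" "proj_m (proj_0 x) = 0"
  "proj_p (proj_0 x) = 0" "proj_m (proj_p x) = 0" "proj_0 (proj_p x) = 0"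
  using proj_in[of x] proj_of_Gm proj_of_G0 proj_of_Gp by auto

lemma Gm_G0_disjoint: "x \<in> Gm \<Longrightarrow> x \<in> G0 \<Longrightarrow> x = 0"
  by (metis proj_of_Gm(1) proj_of_G0(1))

lemma G0_Gp_disjoint: "x \<in> G0 \<Longrightarrow> x \<in> Gp \<Longrightarrow> x = 0"
  by (metis proj_of_G0(2) proj_of_Gp(2))

lemma homog_iff: "homog G0 Gm Gp x \<longleftrightarrow> x \<in> G0 \<or> proj_0 x = 0"
proof -
  have "x \<in> Godd Gm Gp \<longleftrightarrow> proj_0 x = 0"
  proof
    assume "x \<in> Godd Gm Gp"
    then obtain a b where "a \<in> Gm" "b \<in> Gp" "x = a + b" by (auto simp: Godd_def)
    then show "proj_0 x = 0"
      using proj_unique(2)[of a 0 b x] G.subspace_0[OF subspace_G0] by simp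
  next
    assume "proj_0 x = 0"
    then show "x \<in> Godd Gm Gp" using proj_sum[of x] proj_in[of x] by (auto simp: Godd_def)
  qed
  then show ?thesis by (simp add: homog_def)
qed

lemma odd_decomp: "proj_0 x = 0 \<Longrightarrow> x = proj_m x + proj_p x"
  using proj_sum[of x] by simp

lemma odd_in_G0: "proj_0 x = 0 \<Longrightarrow> x \<in> G0 \<Longrightarrow> x = 0"
  using proj_of_G0(2) by force

lemma homog_Gm: "x \<in> Gm \<Longrightarrow> homog G0 Gm Gp x"
  and homog_G0: "x \<in> G0 \<Longrightarrow> homog G0 Gm Gp x"
  and homog_Gp: "x \<in> Gp \<Longrightarrow> homog G0 Gm Gp x"
  by (auto simp: homog_iff proj_of_Gm proj_of_Gp)

lemma antisym_even: "x \<in> G0 \<Longrightarrow> homog G0 Gm Gp y \<Longrightarrow> br y x = - br x y"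
  using br_super_antisym[of y x] by (simp add: homog_G0 ssign_def)

lemma symm_odd: "proj_0 x = 0 \<Longrightarrow> proj_0 y = 0 \<Longrightarrow> br x y = br y x"
proof (cases "x \<in> G0 \<or> y \<in> G0")
  case True
  moreover assume "proj_0 x = 0" "proj_0 y = 0"
  ultimately have "x = 0 \<or> y = 0" using odd_in_G0 by blast
  then show ?thesis by auto
next
  case False
  moreover assume "proj_0 x = 0" "proj_0 y = 0"
  ultimately show ?thesis using br_super_antisym[of x y] by (simp add: homog_iff ssign_def)
qed

lemma jacobi_even: "x \<in> G0 \<or> y \<in> G0 \<Longrightarrow> homog G0 Gm Gp x \<Longrightarrow> homog G0 Gm Gp y \<Longrightarrow> homog G0 Gm Gp z
    \<Longrightarrow> br x (br y z) = br (br x y) z + br y (br x z)"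
  using br_super_jacobi[of x y z] by (auto simp: ssign_def)

lemma jacobi_odd: "proj_0 x = 0 \<Longrightarrow> proj_0 y = 0 \<Longrightarrow> homog G0 Gm Gp z
    \<Longrightarrow> br x (br y z) = br (br x y) z - br y (br x z)"
proof (cases "x \<in> G0 \<or> y \<in> G0")
  case True
  moreover assume "proj_0 x = 0" "proj_0 y = 0"
  ultimately have "x = 0 \<or> y = 0" using odd_in_G0 by blast
  then show ?thesis by auto
next
  case False
  moreover assume "proj_0 x = 0" "proj_0 y = 0" "homog G0 Gm Gp z"
  ultimately show ?thesis using br_super_jacobi[of x y z] by (simp add: homog_iff ssign_def)
qed

lemma jacobi_Gm_G0_G0:
  assumes y: "y \<in> Gm" and h: "h \<in> G0" "h' \<in> G0"
  shows "br (br y h) h' = br (br y h') h + br y (br h h')"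
proof -
  have "br y (br h h') = br (br y h) h' + br h (br y h')"
    using jacobi_even[OF disjI2[OF h(1)] homog_Gm[OF y] homog_G0[OF h(1)] homog_G0[OF h(2)]] .
  moreover have "br h (br y h') = - br (br y h') h"
    using antisym_even[OF h(1) homog_Gm[OF br_Gm_G0[OF h(2) y]]] by simp
  ultimately show ?thesis by (simp add: algebra_simps)
qed

lemma jacobi_G0_Gm_Gp:
  assumes h: "h \<in> G0" and y: "y \<in> Gm" and z: "z \<in> Gp"
  shows "br h (br y z) + br (br y h) z = br y (br h z)"
proof -
  have "br h (br y z) = br (br h y) z + br y (br h z)"
    using jacobi_even[OF disjI1[OF h] homog_G0[OF h] homog_Gm[OF y] homog_Gp[OF z]] .
  moreover have "br h y = - br y h" using antisym_even[OF h homog_Gm[OF y]] by simp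
  ultimately show ?thesis by (simp add: br_minus_left)
qed

lemma jacobi_Gm_Gp_Gp:
  assumes y: "y \<in> Gm" and z: "z \<in> Gp" "z' \<in> Gp"
  shows "br (br y z) z' = - br (br y z') z"
proof -
  have "br y (br z z') = br (br y z) z' - br z (br y z')"
    using jacobi_odd[OF proj_of_Gm(2)[OF y] proj_of_Gp(2)[OF z(1)] homog_Gp[OF z(2)]] .
  moreover have "br z (br y z') = - br (br y z') z"
    using antisym_even[OF br_Gm_Gp[OF y z(2)] homog_Gp[OF z(1)]] .
  ultimately show ?thesis using br_Gp_Gp[OF z] by (simp add: eq_neg_iff_add_eq_0)
qed

lemma subspace_V0: "V.subspace V0"
  and subspace_V1: "V.subspace V1"
  and V_decomp: "\<exists>!p. fst p \<in> V0 \<and> snd p \<in> V1 \<and> v = fst p + snd p"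
  and rho_add: "x \<in> G0 \<Longrightarrow> rho x (v + w) = rho x v + rho x w"
  and rho_scale: "x \<in> G0 \<Longrightarrow> rho x (scV a v) = scV a (rho x v)"
  and rho_add_left: "x \<in> G0 \<Longrightarrow> y \<in> G0 \<Longrightarrow> rho (x + y) v = rho x v + rho y v"
  and rho_scale_left: "x \<in> G0 \<Longrightarrow> rho (sc a x) v = scV a (rho x v)"
  and rho_br: "x \<in> G0 \<Longrightarrow> y \<in> G0 \<Longrightarrow> rho (br x y) v = rho x (rho y v) - rho y (rho x v)"
  and rho_V0: "x \<in> G0 \<Longrightarrow> v \<in> V0 \<Longrightarrow> rho x v \<in> V0"
  and rho_V1: "x \<in> G0 \<Longrightarrow> v \<in> V1 \<Longrightarrow> rho x v \<in> V1"
  and V_nontrivial: "\<exists>v::'v. v \<noteq> 0"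
  and V_simple: "V.subspace U \<Longrightarrow> (\<forall>x\<in>G0. \<forall>w\<in>U. rho x w \<in> U) \<Longrightarrow>
          (\<forall>w\<in>U. \<exists>a b. a \<in> U \<inter> V0 \<and> b \<in> U \<inter> V1 \<and> w = a + b) \<Longrightarrow> U = {0} \<or> U = UNIV"
  using simple_V by (simp_all add: simple_g0_supermodule_def g0_supermodule_def)

lemma V0_V1_disjoint: "v \<in> V0 \<Longrightarrow> v \<in> V1 \<Longrightarrow> v = 0"
  using V_decomp[of v] V.subspace_0[OF subspace_V0] V.subspace_0[OF subspace_V1]
  by (metis add.right_neutral add_0 fst_conv snd_conv)

lemma rho_zero: "x \<in> G0 \<Longrightarrow> rho x 0 = 0"
  using rho_scale[of x 0 0] by simp

lemma rho_zero_left: "rho 0 v = 0"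
  using rho_scale_left[of 0 0 v] G.subspace_0[OF subspace_G0] by simp

end

section \<open>Homomorphisms on \<open>U(\<gg>)\<close> and the coinduced module\<close>

context coind_setting
begin

abbreviation is_homog :: "'g \<Rightarrow> bool" where "is_homog x \<equiv> homog G0 Gm Gp x"
abbreviation homog_word :: "'g list \<Rightarrow> bool" where
    "homog_word u \<equiv> \<forall>x\<in>set u. is_homog x"
abbreviation ug_hom :: "('g list \<Rightarrow> 'v) \<Rightarrow> bool" where
    "ug_hom f \<equiv> hom_Ug sc br Gm G0 Gp scV f"
abbreviation M :: "('g list \<Rightarrow> 'v) set" where "M \<equiv> Coind sc br Gm G0 Gp scV rho Gp"
abbreviation has_par :: "bool \<Rightarrow> ('g list \<Rightarrow> 'v) \<Rightarrow> bool" where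
  "has_par b f \<equiv> has_parity Gm G0 Gp V0 V1 b f"

lemma ug_hom_add: "ug_hom f \<Longrightarrow> f (u @ [x + y] @ w) = f (u @ [x] @ w) + f (u @ [y] @ w)"
  and ug_hom_scale: "ug_hom f \<Longrightarrow> f (u @ [sc a x] @ w) = scV a (f (u @ [x] @ w))"
  and ug_hom_rel: "ug_hom f \<Longrightarrow> is_homog x \<Longrightarrow> is_homog y \<Longrightarrow>
        f (u @ [x, y] @ w) = scV (ssign G0 x y) (f (u @ [y, x] @ w)) + f (u @ [br x y] @ w)"
  unfolding hom_Ug_def by blast+

lemma ug_homI:
  assumes "\<And>u w x y. f (u @ [x + y] @ w) = f (u @ [x] @ w) + f (u @ [y] @ w)"
    and "\<And>u w a x. f (u @ [sc a x] @ w) = scV a (f (u @ [x] @ w))"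
    and "\<And>u w x y. is_homog x \<Longrightarrow> is_homog y
        \<Longrightarrow> f (u @ [x, y] @ w) = scV (ssign G0 x y) (f (u @ [y, x] @ w)) + f (u @ [br x y] @ w)"
  shows "ug_hom f"
  unfolding hom_Ug_def using assms by blast

lemma ug_hom_zero: "ug_hom f \<Longrightarrow> f (u @ [0] @ w) = 0"
  using ug_hom_scale[of f u 0 0 w] by simp

lemma ug_hom_swap_Gm:
  assumes "ug_hom f" "x \<in> Gm" "y \<in> Gm"
  shows "f (u @ [x, y] @ w) = - f (u @ [y, x] @ w)"
proof (cases "x = 0 \<or> y = 0")
  case True
  then show ?thesis
    using ug_hom_zero[OF assms(1), of u] ug_hom_zero[OF assms(1), of "u @ [x]" w]
      ug_hom_zero[OF assms(1), of "u @ [y]" w] by auto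
next
  case False
  then have "x \<notin> G0" "y \<notin> G0" using Gm_G0_disjoint assms by auto
  then show ?thesis
    using ug_hom_rel[OF assms(1) homog_Gm[OF assms(2)] homog_Gm[OF assms(3)], of u w]
      br_Gm_Gm[OF assms(2,3)] ug_hom_zero[OF assms(1), of u w] by (simp add: ssign_def)
qed

lemma V_eq_minus_self: "(v::'v) = - v \<Longrightarrow> v = 0"
proof -
  assume "v = - v"
  then have "scV 2 v = 0" using V.scale_left_distrib[of 1 1 v] by (simp add: eq_neg_iff_add_eq_0)
  then have "scV (1/2) (scV 2 v) = 0" by simp
  then show "v = 0" by simp
qed

lemma ug_hom_square_Gm: "ug_hom f \<Longrightarrow> x \<in> Gm \<Longrightarrow> f (u @ [x, x] @ w) = 0"
  using ug_hom_swap_Gm[of f x x u w] V_eq_minus_self by blast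

lemma ug_hom_gact: "ug_hom f \<Longrightarrow> ug_hom (gact x f)"
  unfolding gact_def
proof (rule ug_homI)
  fix u w a b c
  assume f: "ug_hom f"
  show "f ((u @ [a + b] @ w) @ [x]) = f ((u @ [a] @ w) @ [x]) + f ((u @ [b] @ w) @ [x])"
    using ug_hom_add[OF f, of u a b "w @ [x]"] by simp
  show "f ((u @ [sc c a] @ w) @ [x]) = scV c (f ((u @ [a] @ w) @ [x]))"
    using ug_hom_scale[OF f, of u c a "w @ [x]"] by simp
  assume "is_homog a" "is_homog b"
  then show "f ((u @ [a, b] @ w) @ [x])
      = scV (ssign G0 a b) (f ((u @ [b, a] @ w) @ [x])) + f ((u @ [br a b] @ w) @ [x])"
    using ug_hom_rel[OF f, of a b u "w @ [x]"] by simp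
qed

definition lincomb :: "complex \<Rightarrow> ('a \<Rightarrow> 'v) \<Rightarrow> complex \<Rightarrow> ('a \<Rightarrow> 'v) \<Rightarrow> 'a \<Rightarrow> 'v" where
  "lincomb a f b g = (\<lambda>u. scV a (f u) + scV b (g u))"

lemma lincomb_apply: "lincomb a f b g u = scV a (f u) + scV b (g u)"
  by (simp add: lincomb_def)

lemma lincomb_add: "lincomb 1 f 1 g = (\<lambda>u. f u + g u)"
  and lincomb_diff: "lincomb 1 f (-1) g = (\<lambda>u. f u - g u)"
  and lincomb_scale: "lincomb a f 0 f = (\<lambda>u. scV a (f u))"
  by (simp_all add: lincomb_def)

lemma ug_hom_lincomb:
  assumes "ug_hom f" "ug_hom g"
  shows "ug_hom (lincomb a f b g)"
  unfolding lincomb_def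
proof (rule ug_homI)
  fix u w x y c
  show "scV a (f (u @ [x + y] @ w)) + scV b (g (u @ [x + y] @ w)) =
    scV a (f (u @ [x] @ w)) + scV b (g (u @ [x] @ w))
        + (scV a (f (u @ [y] @ w)) + scV b (g (u @ [y] @ w)))"
    by (subst ug_hom_add[OF assms(1)], subst ug_hom_add[OF assms(2)])
        (simp add: V.scale_right_distrib)
  show "scV a (f (u @ [sc c x] @ w)) + scV b (g (u @ [sc c x] @ w)) =
    scV c (scV a (f (u @ [x] @ w)) + scV b (g (u @ [x] @ w)))"
    by (subst ug_hom_scale[OF assms(1)], subst ug_hom_scale[OF assms(2)])
      (simp add: V.scale_right_distrib mult.commute)
  assume h: "is_homog x" "is_homog y"
  show "scV a (f (u @ [x, y] @ w)) + scV b (g (u @ [x, y] @ w)) =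
    scV (ssign G0 x y) (scV a (f (u @ [y, x] @ w)) + scV b (g (u @ [y, x] @ w))) +
    (scV a (f (u @ [br x y] @ w)) + scV b (g (u @ [br x y] @ w)))"
    by (subst ug_hom_rel[OF assms(1) h], subst ug_hom_rel[OF assms(2) h])
      (simp add: V.scale_right_distrib mult.commute)
qed

lemma M_iff: "f \<in> M \<longleftrightarrow> ug_hom f \<and> (\<forall>p u. set p \<subseteq> G0 \<union> Gp \<longrightarrow> f (p @ u)
        = wact G0 rho p (f u))"
  by (simp add: Coind_def)

lemma M_ug_hom: "f \<in> M \<Longrightarrow> ug_hom f"
  by (simp add: M_iff)

lemma M_Cons_G0: "f \<in> M \<Longrightarrow> x \<in> G0 \<Longrightarrow> f (x # u) = rho x (f u)"
  using M_iff[of f] by (auto simp: wact_def dest: spec[where x="[x]"])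

lemma M_Cons_Gp: "f \<in> M \<Longrightarrow> x \<in> Gp \<Longrightarrow> x \<notin> G0 \<Longrightarrow> f (x # u) = 0"
  using M_iff[of f] by (auto simp: wact_def dest: spec[where x="[x]"])

lemma M_gact: "f \<in> M \<Longrightarrow> gact x f \<in> M"
  by (simp add: M_iff ug_hom_gact) (simp add: gact_def)

lemma wact_lincomb:
  "wact G0 rho p (scV a v + scV b w) = scV a (wact G0 rho p v) + scV b (wact G0 rho p w)"
  by (induction p) (auto simp: wact_def rho_add rho_scale)

lemma wact_zero: "wact G0 rho p 0 = 0"
  by (induction p) (auto simp: wact_def rho_zero)

lemma M_lincomb: "f \<in> M \<Longrightarrow> g \<in> M \<Longrightarrow> lincomb a f b g \<in> M"
  unfolding M_iff using ug_hom_lincomb wact_lincomb by (simp add: lincomb_def)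

lemma M_zero: "(\<lambda>_. 0) \<in> M"
  unfolding M_iff by (auto intro!: ug_homI simp: wact_zero)

lemma M_add: "f \<in> M \<Longrightarrow> g \<in> M \<Longrightarrow> (\<lambda>u. f u + g u) \<in> M"
  using M_lincomb[of f g 1 1] by (simp add: lincomb_add)

lemma M_scale: "f \<in> M \<Longrightarrow> (\<lambda>u. scV a (f u)) \<in> M"
  using M_lincomb[of f f a 0] by (simp add: lincomb_scale)

lemma word_odd_append: "word_odd G0 (a @ b) = (word_odd G0 a \<noteq> word_odd G0 b)"
  and word_odd_Cons: "word_odd G0 (x # b) = ((x \<notin> G0) \<noteq> word_odd G0 b)"
  and word_odd_Nil [simp]: "\<not> word_odd G0 []"
  by (simp_all add: word_odd_def)

lemma has_parity_gact:
  assumes "is_homog x" "has_par c f"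
  shows "has_par (c \<noteq> (x \<notin> G0)) (gact x f)"
  unfolding has_parity_def gact_def
proof (intro allI impI)
  fix u assume "homog_word u"
  then have "homog_word (u @ [x])" using assms(1) by simp
  then have "f (u @ [x]) \<in> (if word_odd G0 (u @ [x]) = c then V0 else V1)"
    using assms(2) unfolding has_parity_def by blast
  then show "f (u @ [x]) \<in> (if word_odd G0 u = (c \<noteq> (x \<notin> G0)) then V0 else V1)"
    by (cases "x \<in> G0"; cases "word_odd G0 u"; cases c) (auto simp: word_odd_append word_odd_Cons)
qed

lemma subspace_V_parity: "V.subspace (if b then V0 else V1)"
  using subspace_V0 subspace_V1 by simp

lemma has_parityI:
  "(\<And>u. homog_word u \<Longrightarrow> f u \<in> (if word_odd G0 u = c then V0 else V1)) \<Longrightarrow> has_par c f"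
  unfolding has_parity_def by blast

lemma has_parityD:
  "has_par c f \<Longrightarrow> homog_word u \<Longrightarrow> f u \<in> (if word_odd G0 u = c then V0 else V1)"
  unfolding has_parity_def by blast

lemma has_parity_zero: "has_par c (\<lambda>_. 0)"
  by (rule has_parityI) (rule V.subspace_0[OF subspace_V_parity])

lemma has_parity_add: "has_par c f \<Longrightarrow> has_par c g \<Longrightarrow> has_par c (\<lambda>u. f u + g u)"
  by (rule has_parityI) (rule V.subspace_add[OF subspace_V_parity has_parityD has_parityD])

lemma has_parity_scale: "has_par c f \<Longrightarrow> has_par c (\<lambda>u. scV a (f u))"
  by (rule has_parityI) (rule V.subspace_scale[OF subspace_V_parity has_parityD])

text \<open>Moving a letter of \<open>\<gg>\<^sub>0 \<union> \<gg>\<^sub>1\<close> leftwards past a letter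
  of \<open>\<gg>\<^sub>-\<^sub>1\<close>, or splitting an odd letter into its two components,
  decreases \<open>weight_moment w = \<Sum>\<^sub>i (i + 1) \<cdot> weight(w\<^sub>i)\<close>.\<close>

definition letter_weight :: "'g \<Rightarrow> nat" where
  "letter_weight x = (if x \<in> Gm then 0 else if x \<in> G0 \<union> Gp then 1 else 2)"

fun weight_moment :: "'g list \<Rightarrow> nat" where
  "weight_moment [] = 0"
| "weight_moment (x # r) = letter_weight x + weight_moment r + sum_list (map letter_weight r)"

lemma weight_moment_append:
  "weight_moment (w @ l)
      = weight_moment w + weight_moment l + length w * sum_list (map letter_weight l)"
  by (induction w) (auto simp: algebra_simps)

lemma weight_moment_replace:
  "letter_weight c < letter_weight d \<Longrightarrow> weight_moment (w @ [c] @ r) < weight_moment (w @ [d] @ r)"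
  by (simp add: weight_moment_append add_less_le_mono)

lemma weight_moment_swap:
  "letter_weight y < letter_weight x
      \<Longrightarrow> weight_moment (w @ [x, y] @ r) < weight_moment (w @ [y, x] @ r)"
  by (simp add: weight_moment_append add_ac)

context
  fixes h :: "'g list \<Rightarrow> 'v" and T :: "bool \<Rightarrow> 'v set"
  assumes h_M: "h \<in> M"
    and subspace_T: "\<And>c. V.subspace (T c)"
    and rho_T: "\<And>x v c. x \<in> G0 \<Longrightarrow> v \<in> T c \<Longrightarrow> rho x v \<in> T c"
begin

abbreviation smaller_word :: "'g list \<Rightarrow> 'g list \<Rightarrow> bool" where
  "smaller_word u' u \<equiv> (u', u) \<in> measures [length, weight_moment]"

lemma normal_order_split:
  assumes u: "u = w @ x # r" and x: "is_homog x" "x \<notin> Gm" "x \<notin> G0 \<union> Gp"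
    and IH: "\<And>u'. smaller_word u' u \<Longrightarrow> homog_word u' \<Longrightarrow> h u' \<in> T (word_odd G0 u')"
    and homs: "homog_word u"
  shows "h u \<in> T (word_odd G0 u)"
proof -
  have x0: "proj_0 x = 0" "x \<notin> G0" using x by (auto simp: homog_iff)
  have xs: "x = proj_m x + proj_p x" using odd_decomp[OF x0(1)] .
  have "proj_m x \<noteq> 0"
    using xs x(3) proj_in(3)[of x] by auto
  moreover have "proj_p x \<noteq> 0"
    using xs x(2) proj_in(1)[of x] by auto
  ultimately have "proj_m x \<notin> G0" "proj_p x \<notin> G0"
    using proj_in Gm_G0_disjoint G0_Gp_disjoint by blast+
  then have par: "word_odd G0 (w @ [proj_m x] @ r) = word_odd G0 u"
      "word_odd G0 (w @ [proj_p x] @ r) = word_odd G0 u"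
    using u x0(2) by (simp_all add: word_odd_append word_odd_Cons)
  have "letter_weight (proj_m x) < letter_weight x" "letter_weight (proj_p x) < letter_weight x"
    using proj_in x(2,3) by (simp_all add: letter_weight_def)
  then have smaller: "smaller_word (w @ [proj_m x] @ r) u" "smaller_word (w @ [proj_p x] @ r) u"
    using u weight_moment_replace by (simp_all add: in_measures)
  have homog: "homog_word (w @ [proj_m x] @ r)" "homog_word (w @ [proj_p x] @ r)"
    using homs u homog_Gm[OF proj_in(1)] homog_Gp[OF proj_in(3)] by simp_all
  have "h (w @ [proj_m x] @ r) \<in> T (word_odd G0 u)" "h (w @ [proj_p x] @ r) \<in> T (word_odd G0 u)"
    using IH[OF smaller(1) homog(1)] IH[OF smaller(2) homog(2)] par by simp_all
  moreover have "h u = h (w @ [proj_m x] @ r) + h (w @ [proj_p x] @ r)"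
    using ug_hom_add[OF M_ug_hom[OF h_M], of w "proj_m x" "proj_p x" r] xs u by simp
  ultimately show ?thesis using V.subspace_add[OF subspace_T] by simp
qed

lemma normal_order_front:
  assumes u: "u = x # r" and x: "x \<in> G0 \<union> Gp"
    and IH: "\<And>u'. smaller_word u' u \<Longrightarrow> homog_word u' \<Longrightarrow> h u' \<in> T (word_odd G0 u')"
    and homs: "homog_word u"
  shows "h u \<in> T (word_odd G0 u)"
proof (cases "x \<in> G0")
  case True
  have "h r \<in> T (word_odd G0 r)" using IH[of r] u homs by (simp add: in_measures)
  then show ?thesis using M_Cons_G0[OF h_M True] rho_T[OF True] u True by (simp add: word_odd_Cons)
next
  case False
  then show ?thesis using M_Cons_Gp[OF h_M] u x V.subspace_0[OF subspace_T] by auto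
qed

lemma normal_order_commute:
  assumes u: "u = w @ [y, x] @ r" and y: "y \<in> Gm" and x: "x \<in> G0 \<union> Gp" "x \<notin> Gm"
    and IH: "\<And>u'. smaller_word u' u \<Longrightarrow> homog_word u' \<Longrightarrow> h u' \<in> T (word_odd G0 u')"
    and homs: "homog_word u"
  shows "h u \<in> T (word_odd G0 u)"
proof (cases "y = 0")
  case True
  then show ?thesis using ug_hom_zero[OF M_ug_hom[OF h_M], of w "x # r"] u
      V.subspace_0[OF subspace_T]
    by simp
next
  case False
  have hx: "is_homog x" using x homog_G0 homog_Gp by blast
  have y0: "y \<notin> G0" using False y Gm_G0_disjoint by blast
  have "smaller_word (w @ [x, y] @ r) u"
    using u weight_moment_swap[of y x w r] y x by (simp add: letter_weight_def in_measures)
  moreover have "homog_word (w @ [x, y] @ r)" using homs u by auto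
  moreover have "word_odd G0 (w @ [x, y] @ r) = word_odd G0 u"
    using u by (auto simp: word_odd_append word_odd_Cons)
  ultimately have swapped: "h (w @ [x, y] @ r) \<in> T (word_odd G0 u)"
    using IH[of "w @ [x, y] @ r"] by simp
  have bracket: "h (w @ [br y x] @ r) \<in> T (word_odd G0 u)"
  proof (cases "br y x = 0")
    case True
    then show ?thesis using ug_hom_zero[OF M_ug_hom[OF h_M]] V.subspace_0[OF subspace_T] by simp
  next
    case False
    have "is_homog (br y x) \<and> (br y x \<notin> G0 \<longleftrightarrow> x \<in> G0)"
    proof (cases "x \<in> G0")
      case True
      then have "br y x \<in> Gm" using br_Gm_G0[OF _ y] by blast
      then show ?thesis using True False Gm_G0_disjoint homog_Gm by blast
    next
      case False
      then have "br y x \<in> G0" using x br_Gm_Gp[OF y] by blast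
      then show ?thesis using False homog_G0 by blast
    qed
    then have "word_odd G0 (w @ [br y x] @ r) = word_odd G0 u" "homog_word (w @ [br y x] @ r)"
      using u y0 homs by (auto simp: word_odd_append word_odd_Cons)
    moreover have "smaller_word (w @ [br y x] @ r) u" using u by (simp add: in_measures)
    ultimately show ?thesis using IH[of "w @ [br y x] @ r"] by simp
  qed
  have "h u = scV (ssign G0 y x) (h (w @ [x, y] @ r)) + h (w @ [br y x] @ r)"
    using ug_hom_rel[OF M_ug_hom[OF h_M] homog_Gm[OF y] hx, of w r] u by simp
  then show ?thesis
    using swapped bracket V.subspace_add[OF subspace_T] V.subspace_scale[OF subspace_T] by simp
qed

lemma M_values_from_Gm_words:
  assumes base: "\<And>w. set w \<subseteq> Gm \<Longrightarrow> h w \<in> T (word_odd G0 w)"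
  shows "homog_word u \<Longrightarrow> h u \<in> T (word_odd G0 u)"
proof (induction u rule: wf_induct[OF wf_measures[of "[length, weight_moment]"]])
  case (1 u)
  note homs = "1.prems"
  have IH: "\<And>u'. smaller_word u' u \<Longrightarrow> homog_word u' \<Longrightarrow> h u' \<in> T (word_odd G0 u')"
    using "1.IH" by blast
  show ?case
  proof (cases "set u \<subseteq> Gm")
    case True
    then show ?thesis using base by blast
  next
    case False
    then obtain w x r where u: "u = w @ x # r" and x: "x \<notin> Gm" and w: "\<forall>y\<in>set w. y \<notin> - Gm"
      using split_list_first_propE[of u "\<lambda>y. y \<in> - Gm"] by blast
    have hx: "is_homog x" using homs u by simp
    show ?thesis
    proof (cases "x \<in> G0 \<union> Gp")
      case False
      with x show ?thesis by (rule normal_order_split[OF u hx _ _ IH homs])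
    next
      case True
      show ?thesis
      proof (cases w rule: rev_cases)
        case Nil
        with u True show ?thesis by (intro normal_order_front[OF _ _ IH homs]) simp_all
      next
        case (snoc w' y)
        with u w True x show ?thesis by (intro normal_order_commute[OF _ _ _ _ IH homs]) auto
      qed
    qed
  qed
qed

end

lemma ug_hom_eq_zeroI:
  assumes f: "ug_hom f" and homog_zero: "\<And>u. homog_word u \<Longrightarrow> f u = 0"
  shows "f u = 0"
proof (induction "length (filter (\<lambda>x. \<not> is_homog x) u)" arbitrary: u rule: less_induct)
  case less
  show ?case
  proof (cases "homog_word u")
    case True
    then show ?thesis using homog_zero by blast
  next
    case False
    then obtain w x r where u: "u = w @ x # r" and x: "\<not> is_homog x"
      using split_list_first_propE[of u "\<lambda>y. \<not> is_homog y"] by blast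
    have "x = proj_0 x + (proj_m x + proj_p x)" using proj_sum[of x] by (simp add: algebra_simps)
    then have "f u = f (w @ [proj_0 x] @ r) + f (w @ [proj_m x + proj_p x] @ r)"
      using ug_hom_add[OF f, of w "proj_0 x" "proj_m x + proj_p x" r] u by simp
    moreover have "is_homog (proj_0 x)" "is_homog (proj_m x + proj_p x)"
      using homog_G0 proj_in by (auto simp: homog_iff proj_add)
    ultimately show ?thesis
        using less[of "w @ [proj_0 x] @ r"] less[of "w @ [proj_m x + proj_p x] @ r"] u x
      by simp
  qed
qed

lemma M_eq_zeroI:
  assumes "f \<in> M" "\<And>w. set w \<subseteq> Gm \<Longrightarrow> f w = 0"
  shows "f = (\<lambda>_. 0)"
proof -
  have "homog_word u \<Longrightarrow> f u \<in> (\<lambda>_. {0}) (word_odd G0 u)" for u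
    by (rule M_values_from_Gm_words[OF assms(1)])
        (use assms(2) rho_zero in \<open>auto simp: V.subspace_def\<close>)
  then show ?thesis using ug_hom_eq_zeroI[OF M_ug_hom[OF assms(1)]] by auto
qed

lemma M_eqI:
  assumes "f \<in> M" "g \<in> M" "\<And>w. set w \<subseteq> Gm \<Longrightarrow> f w = g w"
  shows "f = g"
proof -
  have "(\<lambda>u. f u - g u) \<in> M" using M_lincomb[OF assms(1,2), of 1 "-1"] by (simp add: lincomb_diff)
  then have "(\<lambda>u. f u - g u) = (\<lambda>_. 0)" by (rule M_eq_zeroI) (simp add: assms(3))
  then show ?thesis by (metis (no_types) eq_iff_diff_eq_0 ext)
qed

end

section \<open>An explicit model of the coinduced module\<close>

text \<open>As a module over \<open>\<gg>\<^sub>0 \<oplus> \<gg>\<^sub>-\<^sub>1\<close>, \<open>M\<close> is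
  \<open>Hom(\<Lambda>(\<gg>\<^sub>-\<^sub>1), V)\<close>.  To construct elements of \<open>M\<close> we model
  this space by alternating forms on words, write down the action of \<open>\<gg>\<close>
  on them, check the relations of \<open>U(\<gg>)\<close>, and evaluate at the empty word.\<close>

type_synonym ('g, 'v) word_fun = "'g list \<Rightarrow> 'v"

context coind_setting
begin

definition alt_form :: "('g, 'v) word_fun \<Rightarrow> bool" where
  "alt_form \<phi> \<longleftrightarrow>
     (\<forall>u r a b x y. \<phi> (u @ [sc a x + sc b y] @ r)
         = scV a (\<phi> (u @ [x] @ r)) + scV b (\<phi> (u @ [y] @ r))) \<and>
     (\<forall>u r x y. x \<in> Gm \<longrightarrow> y \<in> Gm \<longrightarrow> \<phi> (u @ [x, y] @ r) = - \<phi> (u @ [y, x] @ r)) \<and>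
     (\<forall>w. \<phi> (map proj_m w) = \<phi> w)"

lemma alt_form_linear: "alt_form \<phi> \<Longrightarrow> \<phi> (u @ [sc a x + sc b y] @ r)
        = scV a (\<phi> (u @ [x] @ r)) + scV b (\<phi> (u @ [y] @ r))"
  and alt_form_swap: "alt_form \<phi> \<Longrightarrow> x \<in> Gm \<Longrightarrow> y \<in> Gm \<Longrightarrow> \<phi> (u @ [x, y] @ r) = - \<phi> (u @ [y, x] @ r)"
  and alt_form_proj: "alt_form \<phi> \<Longrightarrow> \<phi> (map proj_m w) = \<phi> w"
  unfolding alt_form_def by blast+

lemma alt_formI:
  assumes "\<And>u r a b x y. \<phi> (u @ [sc a x + sc b y] @ r)
      = scV a (\<phi> (u @ [x] @ r)) + scV b (\<phi> (u @ [y] @ r))"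
    and "\<And>u r x y. x \<in> Gm \<Longrightarrow> y \<in> Gm \<Longrightarrow> \<phi> (u @ [x, y] @ r) = - \<phi> (u @ [y, x] @ r)"
    and "\<And>w. \<phi> (map proj_m w) = \<phi> w"
  shows "alt_form \<phi>"
  unfolding alt_form_def using assms by blast

lemma alt_form_add: "alt_form \<phi> \<Longrightarrow> \<phi> (u @ [x + y] @ r) = \<phi> (u @ [x] @ r) + \<phi> (u @ [y] @ r)"
  using alt_form_linear[of \<phi> u 1 x 1 y r] by simp

lemma alt_form_scale: "alt_form \<phi> \<Longrightarrow> \<phi> (u @ [sc a x] @ r) = scV a (\<phi> (u @ [x] @ r))"
  using alt_form_linear[of \<phi> u a x 0 x r] by simp

lemma alt_form_zero: "alt_form \<phi> \<Longrightarrow> \<phi> (u @ [0] @ r) = 0"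
  using alt_form_scale[of \<phi> u 0 0 r] by simp

lemma alt_form_minus: "alt_form \<phi> \<Longrightarrow> \<phi> (u @ [- x] @ r) = - \<phi> (u @ [x] @ r)"
  using alt_form_scale[of \<phi> u "-1" x r] by simp

lemma proj_m_comp [simp]: "proj_m \<circ> proj_m = proj_m"
  by (rule ext) simp

lemma map_proj_m_idem [simp]: "map proj_m (map proj_m w) = map proj_m w"
  by (induction w) auto

lemma map_proj_m_Gm: "set w \<subseteq> Gm \<Longrightarrow> map proj_m w = w"
  by (induction w) (auto simp: proj_of_Gm(1))

lemma set_map_proj_m: "set (map proj_m w) \<subseteq> Gm"
  using proj_in(1) by auto

lemma alt_form_eqI: "alt_form F \<Longrightarrow> alt_form G \<Longrightarrow> (\<And>w. set w \<subseteq> Gm \<Longrightarrow> F w = G w) \<Longrightarrow> F = G"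
proof (rule ext)
  fix w assume a: "alt_form F" "alt_form G" "\<And>w. set w \<subseteq> Gm \<Longrightarrow> F w = G w"
  have "F w = F (map proj_m w)" using alt_form_proj[OF a(1)] by simp
  also have "\<dots> = G (map proj_m w)" using a(3) set_map_proj_m by blast
  also have "\<dots> = G w" using alt_form_proj[OF a(2)] by simp
  finally show "F w = G w" .
qed

lemma alt_form_lincomb:
  assumes "alt_form \<phi>" "alt_form \<psi>"
  shows "alt_form (lincomb a \<phi> b \<psi>)"
proof (rule alt_formI)
  fix u r c d x y
  show "lincomb a \<phi> b \<psi> (u @ [sc c x + sc d y] @ r) =
    scV c (lincomb a \<phi> b \<psi> (u @ [x] @ r)) + scV d (lincomb a \<phi> b \<psi> (u @ [y] @ r))"
    unfolding lincomb_def alt_form_linear[OF assms(1)] alt_form_linear[OF assms(2)]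
    by (simp add: V.scale_right_distrib mult.commute add_ac)
next
  fix u r x y assume "x \<in> Gm" "y \<in> Gm"
  then show "lincomb a \<phi> b \<psi> (u @ [x, y] @ r) = - lincomb a \<phi> b \<psi> (u @ [y, x] @ r)"
    unfolding lincomb_def
        using alt_form_swap[OF assms(1), of x y u r] alt_form_swap[OF assms(2), of x y u r] by simp
next
  fix w show "lincomb a \<phi> b \<psi> (map proj_m w) = lincomb a \<phi> b \<psi> w"
    unfolding lincomb_def using alt_form_proj[OF assms(1)] alt_form_proj[OF assms(2)] by simp
qed

lemma lincomb_minus: "lincomb (-1) \<phi> 0 \<phi> = (\<lambda>w. - \<phi> w)"
  by (simp add: lincomb_def)

lemma alt_form_add_fun: "alt_form A \<Longrightarrow> alt_form B \<Longrightarrow> alt_form (\<lambda>w. A w + B w)"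
  using alt_form_lincomb[of A B 1 1] by (simp add: lincomb_add)

lemma alt_form_minus_fun: "alt_form A \<Longrightarrow> alt_form (\<lambda>w. - A w)"
  using alt_form_lincomb[of A A "-1" 0] by (simp add: lincomb_minus)

definition rshift :: "'g \<Rightarrow> ('g, 'v) word_fun \<Rightarrow> ('g, 'v) word_fun" where
  "rshift y \<phi> = (\<lambda>w. \<phi> (w @ [y]))"

lemma alt_form_rshift:
  assumes "alt_form \<phi>"
  shows "alt_form (rshift y \<phi>)"
proof (rule alt_formI)
  fix u r c d x z
  show "rshift y \<phi> (u @ [sc c x + sc d z] @ r)
      = scV c (rshift y \<phi> (u @ [x] @ r)) + scV d (rshift y \<phi> (u @ [z] @ r))"
    unfolding rshift_def using alt_form_linear[OF assms, of u c x d z "r @ [y]"] by simp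
next
  fix u r x z assume "x \<in> Gm" "z \<in> Gm"
  then show "rshift y \<phi> (u @ [x, z] @ r) = - rshift y \<phi> (u @ [z, x] @ r)"
    unfolding rshift_def using alt_form_swap[OF assms, of x z u "r @ [y]"] by simp
next
  fix w
  have "\<phi> (map proj_m w @ [y]) = \<phi> (map proj_m (map proj_m w @ [y]))"
      using alt_form_proj[OF assms] by metis
  also have "\<dots> = \<phi> (map proj_m (w @ [y]))" by simp
  also have "\<dots> = \<phi> (w @ [y])" using alt_form_proj[OF assms] by metis
  finally show "rshift y \<phi> (map proj_m w) = rshift y \<phi> w" unfolding rshift_def .
qed

lemma rshift_lincomb: "rshift y (lincomb a \<phi> b \<psi>) = lincomb a (rshift y \<phi>) b (rshift y \<psi>)"
  by (simp add: rshift_def lincomb_def)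

lemma rshift_param: "alt_form \<phi>
    \<Longrightarrow> rshift (sc a x + sc b y) \<phi> = lincomb a (rshift x \<phi>) b (rshift y \<phi>)"
  unfolding rshift_def lincomb_def using alt_form_linear[of \<phi> _ a x b y "[]"] by simp

lemma rshift_zero: "alt_form \<phi> \<Longrightarrow> rshift 0 \<phi> = (\<lambda>_. 0)"
  unfolding rshift_def using alt_form_zero[of \<phi> _ "[]"] by auto

lemma rshift_zero_apply: "alt_form \<phi> \<Longrightarrow> rshift 0 \<phi> w = 0"
  using rshift_zero by metis

lemma rshift_add: "rshift c (\<lambda>w. A w + B w) u = rshift c A u + rshift c B u"
  by (simp add: rshift_def)

lemma rshift_minus: "alt_form \<phi> \<Longrightarrow> rshift (- c) \<phi> w = - rshift c \<phi> w"
  using alt_form_minus[of \<phi> w c "[]"] by (simp add: rshift_def)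

lemma rshift_anticomm:
    "x \<in> Gm \<Longrightarrow> y \<in> Gm \<Longrightarrow> alt_form \<phi> \<Longrightarrow> rshift x (rshift y \<phi>) w = - rshift y (rshift x \<phi>) w"
  using alt_form_swap[of \<phi> x y w "[]"] by (simp add: rshift_def)

text \<open>The action of \<open>h \<in> \<gg>\<^sub>0\<close> comes from
  \<open>w y h = w h y + w [y, h]\<close> in \<open>U(\<gg>)\<close>: \<open>h\<close> is commuted leftwards
  through the word (read backwards), and at the empty word it acts through \<open>\<rho>\<close>.\<close>

primrec even_act_rev :: "'g \<Rightarrow> ('g, 'v) word_fun \<Rightarrow> ('g, 'v) word_fun" where
  "even_act_rev h \<phi> [] = rho (proj_0 h) (\<phi> [])"
| "even_act_rev h \<phi> (y # r) = even_act_rev h (rshift y \<phi>) r + \<phi> (rev r @ [br y (proj_0 h)])"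

definition even_act :: "'g \<Rightarrow> ('g, 'v) word_fun \<Rightarrow> ('g, 'v) word_fun" where
  "even_act h \<phi> = (\<lambda>w. even_act_rev h \<phi> (rev (map proj_m w)))"

lemma even_act_Nil [simp]: "even_act h \<phi> [] = rho (proj_0 h) (\<phi> [])"
  by (simp add: even_act_def)

lemma even_act_snoc: "even_act h \<phi> (w @ [y])
        = even_act h (rshift (proj_m y) \<phi>) w + \<phi> (map proj_m w @ [br (proj_m y) (proj_0 h)])"
  by (simp add: even_act_def)

lemma even_act_rev_lincomb: "even_act_rev h (lincomb a \<phi> b \<psi>) r
        = scV a (even_act_rev h \<phi> r) + scV b (even_act_rev h \<psi> r)"
proof (induction r arbitrary: \<phi> \<psi>)
  case Nil
  then show ?case using proj_in(2) by (simp add: lincomb_apply rho_add rho_scale)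
next
  case (Cons y r)
  show ?case
    by (simp only: even_act_rev.simps rshift_lincomb Cons.IH)
        (simp add: lincomb_apply V.scale_right_distrib V.scale_right_diff_distrib add_ac)
qed

lemma even_act_lincomb: "even_act h (lincomb a \<phi> b \<psi>) = lincomb a (even_act h \<phi>) b (even_act h \<psi>)"
  by (rule ext) (simp add: even_act_def even_act_rev_lincomb lincomb_apply)

lemma even_act_add: "even_act h (\<lambda>w. \<phi> w + \<psi> w) u = even_act h \<phi> u + even_act h \<psi> u"
  using even_act_lincomb[of h 1 \<phi> 1 \<psi>] by (simp add: lincomb_def)

lemma even_act_minus: "even_act h (\<lambda>w. - \<phi> w) u = - even_act h \<phi> u"
  using even_act_lincomb[of h "-1" \<phi> 0 \<phi>] by (simp add: lincomb_def)

lemma even_act_diff: "even_act h (\<lambda>w. \<phi> w - \<psi> w) u = even_act h \<phi> u - even_act h \<psi> u"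
  using even_act_lincomb[of h 1 \<phi> "-1" \<psi>] by (simp add: lincomb_def)

lemma even_act_rev_param: "alt_form \<phi> \<Longrightarrow> even_act_rev (sc a h + sc b h') \<phi> r
        = scV a (even_act_rev h \<phi> r) + scV b (even_act_rev h' \<phi> r)"
proof (induction r arbitrary: \<phi>)
  case Nil
  then show ?case using proj_in(2)
      by (simp add: proj_linear rho_add_left rho_scale_left G.subspace_scale[OF subspace_G0])
next
  case (Cons y r)
  have "br y (proj_0 (sc a h + sc b h')) = sc a (br y (proj_0 h)) + sc b (br y (proj_0 h'))"
    by (simp add: proj_linear br_add_right br_scale_right)
  then show ?case using Cons.IH[OF alt_form_rshift[OF Cons.prems]]
      alt_form_linear[OF Cons.prems, of "rev r" a _ b _ "[]"]
    by (simp add: V.scale_right_distrib V.scale_right_diff_distrib add_ac)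
qed

lemma even_act_param: "alt_form \<phi> \<Longrightarrow> even_act (sc a h + sc b h') \<phi>
        = lincomb a (even_act h \<phi>) b (even_act h' \<phi>)"
  by (rule ext) (simp add: even_act_def even_act_rev_param lincomb_def)

lemma even_act_param_add: "alt_form \<phi> \<Longrightarrow> even_act (h + h') \<phi> u
        = even_act h \<phi> u + even_act h' \<phi> u"
  using even_act_param[of \<phi> 1 h 1 h'] by (simp add: lincomb_def)

lemma even_act_param_zero: "alt_form \<phi> \<Longrightarrow> even_act 0 \<phi> u = 0"
  using even_act_param[of \<phi> 0 0 0 0] by (simp add: lincomb_def)

lemma even_act_rev_proj: "even_act_rev (proj_0 h) \<phi> r = even_act_rev h \<phi> r"
  by (induction r arbitrary: \<phi>) auto

lemma even_act_proj: "even_act (proj_0 h) = even_act h"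
  by (rule ext)+ (simp add: even_act_def even_act_rev_proj)

lemma even_act_map_proj: "even_act h \<phi> (map proj_m w) = even_act h \<phi> w"
  by (simp add: even_act_def)

lemma even_act_snoc_split: "even_act h \<phi> (u @ [c] @ r @ [t])
        = even_act h (rshift (proj_m t) \<phi>) (u @ [c] @ r)
            + \<phi> (map proj_m u @ [proj_m c] @ map proj_m r @ [br (proj_m t) (proj_0 h)])"
  using even_act_snoc[of h \<phi> "u @ [c] @ r" t] by simp

lemma even_act_linear:
  assumes "alt_form \<phi>"
  shows "even_act h \<phi> (u @ [sc a x + sc b y] @ r)
    = scV a (even_act h \<phi> (u @ [x] @ r)) + scV b (even_act h \<phi> (u @ [y] @ r))"
  using assms
proof (induction r arbitrary: \<phi> rule: rev_induct)
  case Nil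
  have p: "proj_m (sc a x + sc b y) = sc a (proj_m x) + sc b (proj_m y)" by (rule proj_linear)
  have q: "br (sc a (proj_m x) + sc b (proj_m y)) (proj_0 h)
      = sc a (br (proj_m x) (proj_0 h)) + sc b (br (proj_m y) (proj_0 h))"
    by (simp add: br_add_left br_scale_left)
  have "even_act h \<phi> (u @ [sc a x + sc b y])
      = even_act h (rshift (sc a (proj_m x) + sc b (proj_m y)) \<phi>) u
         + \<phi> (map proj_m u @ [sc a (br (proj_m x) (proj_0 h)) + sc b (br (proj_m y) (proj_0 h))] @
             [])"
    using even_act_snoc[of h \<phi> u "sc a x + sc b y"] p q by simp
  also have "\<dots> = scV a (even_act h (rshift (proj_m x) \<phi>) u)
      + scV b (even_act h (rshift (proj_m y) \<phi>) u)
       + (scV a (\<phi> (map proj_m u @ [br (proj_m x) (proj_0 h)]))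
           + scV b (\<phi> (map proj_m u @ [br (proj_m y) (proj_0 h)])))"
    using alt_form_linear[OF Nil.prems, of "map proj_m u" a _ b _ "[]"]
    by (simp add: rshift_param[OF Nil.prems] even_act_lincomb lincomb_apply)
  also have "\<dots> = scV a (even_act h \<phi> (u @ [x])) + scV b (even_act h \<phi> (u @ [y]))"
    by (simp add: even_act_snoc V.scale_right_distrib V.scale_right_diff_distrib add_ac)
  finally show ?case by simp
next
  case (snoc t r)
  have IH: "even_act h (rshift (proj_m t) \<phi>) (u @ [sc a x + sc b y] @ r) =
     scV a (even_act h (rshift (proj_m t) \<phi>) (u @ [x] @ r))
         + scV b (even_act h (rshift (proj_m t) \<phi>) (u @ [y] @ r))"
    by (rule snoc.IH[OF alt_form_rshift[OF snoc.prems]])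
  have "\<phi> (map proj_m u @ [proj_m (sc a x + sc b y)] @ map proj_m r @ [br (proj_m t) (proj_0 h)])
    = scV a (\<phi> (map proj_m u @ [proj_m x] @ map proj_m r @ [br (proj_m t) (proj_0 h)]))
        + scV b (\<phi> (map proj_m u @ [proj_m y] @ map proj_m r @ [br (proj_m t) (proj_0 h)]))"
    by (simp only: proj_linear alt_form_linear[OF snoc.prems])
  then show ?case using IH
      by (simp only: even_act_snoc_split V.scale_right_distrib V.scale_right_diff_distrib add_ac)
qed

lemma even_act_swap_Gm:
  assumes "alt_form \<phi>" and xy: "x \<in> Gm" "y \<in> Gm"
  shows "even_act h \<phi> (u @ [x, y] @ r) = - even_act h \<phi> (u @ [y, x] @ r)"
  using assms(1)
proof (induction r arbitrary: \<phi> rule: rev_induct)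
  case Nil
  let ?h = "proj_0 h"
  have bx: "br x ?h \<in> Gm" "br y ?h \<in> Gm" using br_Gm_G0 proj_in(2) xy by auto
  have e: "even_act h \<phi> (u @ [x', y'])
      = even_act h (rshift x' (rshift y' \<phi>)) u + \<phi> (map proj_m u @ [br x' ?h, y'])
          + \<phi> (map proj_m u @ [x', br y' ?h])" if "x' \<in> Gm" "y' \<in> Gm" for x' y'
  proof -
    have "even_act h \<phi> (u @ [x', y']) = even_act h \<phi> ((u @ [x']) @ [y'])" by simp
    also have "\<dots> = even_act h (rshift y' \<phi>) (u @ [x']) + \<phi> (map proj_m u @ [x', br y' ?h])"
      by (simp only: even_act_snoc) (simp add: that proj_of_Gm(1))
    also have "\<dots> = even_act h (rshift x' (rshift y' \<phi>)) u + \<phi> (map proj_m u @ [br x' ?h, y'])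
          + \<phi> (map proj_m u @ [x', br y' ?h])"
      by (simp add: even_act_snoc rshift_def that proj_of_Gm(1))
    finally show ?thesis .
  qed
  have yy: "rshift x (rshift y \<phi>) = (\<lambda>w. - rshift y (rshift x \<phi>) w)"
    by (rule ext) (simp add: rshift_def alt_form_swap[OF Nil.prems xy, of _ "[]", simplified])
  have A: "even_act h (rshift x (rshift y \<phi>)) u = - even_act h (rshift y (rshift x \<phi>)) u"
    by (simp only: yy even_act_minus)
  have P: "\<phi> (map proj_m u @ [br x ?h, y]) = - \<phi> (map proj_m u @ [y, br x ?h])"
    using alt_form_swap[OF Nil.prems bx(1) xy(2), of "map proj_m u" "[]"] by simp
  have Q: "\<phi> (map proj_m u @ [x, br y ?h]) = - \<phi> (map proj_m u @ [br y ?h, x])"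
    using alt_form_swap[OF Nil.prems xy(1) bx(2), of "map proj_m u" "[]"] by simp
  show ?case using e[OF xy] e[OF xy(2,1)] A P Q by simp
next
  case (snoc t r)
  have IH: "even_act h (rshift (proj_m t) \<phi>) (u @ [x, y] @ r)
      = - even_act h (rshift (proj_m t) \<phi>) (u @ [y, x] @ r)"
    by (rule snoc.IH[OF alt_form_rshift[OF snoc.prems]])
  have s2: "even_act h \<phi> (u @ [x', y'] @ r @ [t])
      = even_act h (rshift (proj_m t) \<phi>) (u @ [x', y'] @ r)
          + \<phi> (map proj_m u @ [x', y'] @ map proj_m r @ [br (proj_m t) (proj_0 h)])" if "x' \<in>
              Gm" "y'
          \<in> Gm" for x' y'
    using even_act_snoc[of h \<phi> "u @ [x', y'] @ r" t] that by (simp add: proj_of_Gm(1))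
  have P: "\<phi> (map proj_m u @ [x, y] @ map proj_m r @ [br (proj_m t) (proj_0 h)])
      = - \<phi> (map proj_m u @ [y, x] @ map proj_m r @ [br (proj_m t) (proj_0 h)])"
    by (rule alt_form_swap[OF snoc.prems xy])
  show ?case using s2[OF xy] s2[OF xy(2,1)] IH P by simp
qed

lemma alt_form_even_act: "alt_form \<phi> \<Longrightarrow> alt_form (even_act h \<phi>)"
  by (rule alt_formI[OF even_act_linear even_act_swap_Gm even_act_map_proj])

lemma rshift_even_act: "alt_form \<phi> \<Longrightarrow> rshift y (even_act h \<phi>)
        = (\<lambda>w. even_act h (rshift (proj_m y) \<phi>) w + rshift (br (proj_m y) (proj_0 h)) \<phi> w)"
proof (rule ext)
  fix w assume a: "alt_form \<phi>"
  have "\<phi> (map proj_m w @ [br (proj_m y) (proj_0 h)]) = rshift (br (proj_m y) (proj_0 h)) \<phi> w"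
    using alt_form_proj[OF alt_form_rshift[OF a]] by (simp add: rshift_def)
  then show "rshift y (even_act h \<phi>) w
      = even_act h (rshift (proj_m y) \<phi>) w + rshift (br (proj_m y) (proj_0 h)) \<phi> w"
    by (simp add: rshift_def even_act_snoc)
qed

lemma even_act_commutator:
  assumes h: "h \<in> G0" "h' \<in> G0" and ph: "alt_form \<phi>"
  shows "even_act h (even_act h' \<phi>) = (\<lambda>w. even_act h' (even_act h \<phi>) w + even_act (br h h') \<phi> w)"
proof (rule alt_form_eqI)
  show "alt_form (even_act h (even_act h' \<phi>))"
      by (rule alt_form_even_act[OF alt_form_even_act[OF ph]])
  show "alt_form (\<lambda>w. even_act h' (even_act h \<phi>) w + even_act (br h h') \<phi> w)"
      by (rule alt_form_add_fun[OF alt_form_even_act[OF alt_form_even_act[OF ph]]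
          alt_form_even_act[OF ph]])
  have hh: "br h h' \<in> G0" using br_G0_G0 h by blast
  have pzh: "proj_0 h = h" "proj_0 h' = h'" "proj_0 (br h h') = br h h'"
      using proj_of_G0(2) h hh by auto
  fix w assume "set w \<subseteq> Gm"
  then show "even_act h (even_act h' \<phi>) w = even_act h' (even_act h \<phi>) w + even_act (br h h') \<phi> w"
    using ph
  proof (induction w arbitrary: \<phi> rule: rev_induct)
    case Nil
    then show ?case by (simp add: pzh rho_br h)
  next
    case (snoc y w)
    have ym: "y \<in> Gm" and wm: "set w \<subseteq> Gm" using snoc.prems by auto
    note p = snoc.prems(2)
    have pmy: "proj_m y = y" using proj_of_Gm(1) ym by blast
    have mw: "map proj_m w = w" using map_proj_m_Gm wm by blast
    have b1: "br y h \<in> Gm" "br y h' \<in> Gm" using br_Gm_G0 h ym by auto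
    have e1: "even_act h (even_act h' \<phi>) (w @ [y])
        = even_act h (even_act h' (rshift y \<phi>)) w + even_act h (rshift (br y h') \<phi>) w
          + even_act h' (rshift (br y h) \<phi>) w + \<phi> (w @ [br (br y h) h'])"
      if "h \<in> G0" "h' \<in> G0" "br y h \<in> Gm" "br y h' \<in> Gm" for h h'
    proof -
      have "even_act h (even_act h' \<phi>) (w @ [y])
          = even_act h (rshift y (even_act h' \<phi>)) w + even_act h' \<phi> (w @ [br y h])"
        by (simp add: even_act_snoc pmy mw proj_of_G0(2) that)
      also have "\<dots> = even_act h (even_act h' (rshift y \<phi>)) w + even_act h (rshift (br y h') \<phi>) w
          + even_act h' (rshift (br y h) \<phi>) w + \<phi> (w @ [br (br y h) h'])"
        by (simp add: rshift_even_act[OF p] even_act_add even_act_snoc pmy mw proj_of_G0(2)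
            proj_of_Gm(1) that)
      finally show ?thesis .
    qed
    have e3: "even_act (br h h') \<phi> (w @ [y])
        = even_act (br h h') (rshift y \<phi>) w + \<phi> (w @ [br y (br h h')])"
      by (simp add: even_act_snoc pmy mw pzh)
    have IH: "even_act h (even_act h' (rshift y \<phi>)) w
        = even_act h' (even_act h (rshift y \<phi>)) w + even_act (br h h') (rshift y \<phi>) w"
      using snoc.IH[OF wm alt_form_rshift[OF p]] .
    have j: "br (br y h) h' = br (br y h') h + br y (br h h')" by (rule jacobi_Gm_G0_G0[OF ym h])
    have J: "\<phi> (w @ [br (br y h) h']) = \<phi> (w @ [br (br y h') h]) + \<phi> (w @ [br y (br h h')])"
      using alt_form_add[OF p, of w "br (br y h') h" "br y (br h h')" "[]"] j by simp
    show ?case using e1[OF h b1] e1[OF h(2,1) b1(2,1)] e3 IH J by (simp add: add_ac)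
  qed
qed

text \<open>Likewise \<open>z \<in> \<gg>\<^sub>1\<close> uses \<open>w y z = - w z y + w [y, z]\<close>
  with \<open>[y, z] \<in> \<gg>\<^sub>0\<close>, and acts by zero at the empty word.\<close>

primrec plus_act_rev :: "'g \<Rightarrow> ('g, 'v) word_fun \<Rightarrow> ('g, 'v) word_fun" where
  "plus_act_rev z \<phi> [] = 0"
| "plus_act_rev z \<phi> (y # r)
    = - plus_act_rev z (rshift y \<phi>) r + even_act (br y (proj_p z)) \<phi> (rev r)"

definition plus_act :: "'g \<Rightarrow> ('g, 'v) word_fun \<Rightarrow> ('g, 'v) word_fun" where
  "plus_act z \<phi> = (\<lambda>w. plus_act_rev z \<phi> (rev (map proj_m w)))"

lemma plus_act_Nil [simp]: "plus_act z \<phi> [] = 0"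
  by (simp add: plus_act_def)

lemma plus_act_snoc: "plus_act z \<phi> (w @ [y])
        = - plus_act z (rshift (proj_m y) \<phi>) w + even_act (br (proj_m y) (proj_p z)) \<phi> w"
  by (simp add: plus_act_def) (metis even_act_map_proj)

lemma plus_act_rev_lincomb: "plus_act_rev z (lincomb a \<phi> b \<psi>) r
        = scV a (plus_act_rev z \<phi> r) + scV b (plus_act_rev z \<psi> r)"
proof (induction r arbitrary: \<phi> \<psi>)
  case Nil
  then show ?case by simp
next
  case (Cons y r)
  show ?case
    by (simp only: plus_act_rev.simps rshift_lincomb Cons.IH even_act_lincomb)
        (simp add: lincomb_apply V.scale_right_distrib V.scale_right_diff_distrib add_ac)
qed

lemma plus_act_lincomb: "plus_act z (lincomb a \<phi> b \<psi>) = lincomb a (plus_act z \<phi>) b (plus_act z \<psi>)"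
  by (rule ext) (simp add: plus_act_def plus_act_rev_lincomb lincomb_apply)

lemma plus_act_add: "plus_act z (\<lambda>w. \<phi> w + \<psi> w) u = plus_act z \<phi> u + plus_act z \<psi> u"
  using plus_act_lincomb[of z 1 \<phi> 1 \<psi>] by (simp add: lincomb_def)

lemma plus_act_minus: "plus_act z (\<lambda>w. - \<phi> w) u = - plus_act z \<phi> u"
  using plus_act_lincomb[of z "-1" \<phi> 0 \<phi>] by (simp add: lincomb_def)

lemma plus_act_diff: "plus_act z (\<lambda>w. \<phi> w - \<psi> w) u = plus_act z \<phi> u - plus_act z \<psi> u"
  using plus_act_lincomb[of z 1 \<phi> "-1" \<psi>] by (simp add: lincomb_def)

lemma plus_act_rev_param: "alt_form \<phi> \<Longrightarrow> plus_act_rev (sc a z + sc b z') \<phi> r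
        = scV a (plus_act_rev z \<phi> r) + scV b (plus_act_rev z' \<phi> r)"
proof (induction r arbitrary: \<phi>)
  case Nil
  then show ?case by simp
next
  case (Cons y r)
  have "br y (proj_p (sc a z + sc b z')) = sc a (br y (proj_p z)) + sc b (br y (proj_p z'))"
    by (simp add: proj_linear br_add_right br_scale_right)
  then show ?case using Cons.IH[OF alt_form_rshift[OF Cons.prems]] even_act_param[OF Cons.prems]
    by (simp add: lincomb_apply V.scale_right_distrib V.scale_right_diff_distrib add_ac)
qed

lemma plus_act_param: "alt_form \<phi> \<Longrightarrow> plus_act (sc a z + sc b z') \<phi>
        = lincomb a (plus_act z \<phi>) b (plus_act z' \<phi>)"
  by (rule ext) (simp add: plus_act_def plus_act_rev_param lincomb_apply)

lemma plus_act_param_minus: "alt_form \<phi> \<Longrightarrow> plus_act (- z) \<phi> u = - plus_act z \<phi> u"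
  using plus_act_param[of \<phi> "-1" z 0 z] by (simp add: lincomb_def)

lemma plus_act_param_zero: "alt_form \<phi> \<Longrightarrow> plus_act 0 \<phi> u = 0"
  using plus_act_param[of \<phi> 0 0 0 0] by (simp add: lincomb_def)

lemma plus_act_rev_proj: "plus_act_rev (proj_p z) \<phi> r = plus_act_rev z \<phi> r"
  by (induction r arbitrary: \<phi>) auto

lemma plus_act_proj: "plus_act (proj_p z) = plus_act z"
  by (rule ext)+ (simp add: plus_act_def plus_act_rev_proj)

lemma plus_act_map_proj: "plus_act z \<phi> (map proj_m w) = plus_act z \<phi> w"
  by (simp add: plus_act_def)

lemma plus_act_snoc_split: "plus_act z \<phi> (u @ [c] @ r @ [t])
        = - plus_act z (rshift (proj_m t) \<phi>) (u @ [c] @ r)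
            + even_act (br (proj_m t) (proj_p z)) \<phi> (u @ [c] @ r)"
  using plus_act_snoc[of z \<phi> "u @ [c] @ r" t] by simp

lemma plus_act_linear:
  assumes "alt_form \<phi>"
  shows "plus_act z \<phi> (u @ [sc a x + sc b y] @ r)
    = scV a (plus_act z \<phi> (u @ [x] @ r)) + scV b (plus_act z \<phi> (u @ [y] @ r))"
  using assms
proof (induction r arbitrary: \<phi> rule: rev_induct)
  case Nil
  have p: "proj_m (sc a x + sc b y) = sc a (proj_m x) + sc b (proj_m y)" by (rule proj_linear)
  have q: "br (sc a (proj_m x) + sc b (proj_m y)) (proj_p z)
      = sc a (br (proj_m x) (proj_p z)) + sc b (br (proj_m y) (proj_p z))"
    by (simp add: br_add_left br_scale_left)
  have "plus_act z \<phi> (u @ [sc a x + sc b y])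
      = - plus_act z (rshift (sc a (proj_m x) + sc b (proj_m y)) \<phi>) u
         + even_act (sc a (br (proj_m x) (proj_p z)) + sc b (br (proj_m y) (proj_p z))) \<phi> u"
    using plus_act_snoc[of z \<phi> u "sc a x + sc b y"] p q by simp
  also have "\<dots> =
      - (scV a (plus_act z (rshift (proj_m x) \<phi>) u) + scV b (plus_act z (rshift (proj_m y) \<phi>) u))
       + (scV a (even_act (br (proj_m x) (proj_p z)) \<phi> u)
           + scV b (even_act (br (proj_m y) (proj_p z)) \<phi> u))"
    by (simp add: rshift_param[OF Nil.prems] plus_act_lincomb even_act_param[OF Nil.prems]
        lincomb_apply)
  also have "\<dots> = scV a (plus_act z \<phi> (u @ [x])) + scV b (plus_act z \<phi> (u @ [y]))"
    by (simp add: plus_act_snoc V.scale_right_distrib V.scale_right_diff_distrib add_ac)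
  finally show ?case by simp
next
  case (snoc t r)
  have IH: "plus_act z (rshift (proj_m t) \<phi>) (u @ [sc a x + sc b y] @ r) =
     scV a (plus_act z (rshift (proj_m t) \<phi>) (u @ [x] @ r))
         + scV b (plus_act z (rshift (proj_m t) \<phi>) (u @ [y] @ r))"
    by (rule snoc.IH[OF alt_form_rshift[OF snoc.prems]])
  have H: "even_act (br (proj_m t) (proj_p z)) \<phi> (u @ [sc a x + sc b y] @ r) =
     scV a (even_act (br (proj_m t) (proj_p z)) \<phi> (u @ [x] @ r))
         + scV b (even_act (br (proj_m t) (proj_p z)) \<phi> (u @ [y] @ r))"
    by (rule alt_form_linear[OF alt_form_even_act[OF snoc.prems]])
  show ?case using IH H
      by (simp only: plus_act_snoc_split V.scale_right_distrib V.scale_minus_right add_ac minus_add)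
qed

lemma plus_act_swap_Gm:
  assumes "alt_form \<phi>" and xy: "x \<in> Gm" "y \<in> Gm"
  shows "plus_act z \<phi> (u @ [x, y] @ r) = - plus_act z \<phi> (u @ [y, x] @ r)"
  using assms(1)
proof (induction r arbitrary: \<phi> rule: rev_induct)
  case Nil
  let ?z = "proj_p z"
  have e: "plus_act z \<phi> (u @ [x', y'])
      = plus_act z (rshift x' (rshift y' \<phi>)) u - even_act (br x' ?z) (rshift y' \<phi>) u
          + even_act (br y' ?z) (rshift x' \<phi>) u
          + \<phi> (map proj_m u @ [br x' (br y' ?z)])" if "x' \<in> Gm" "y' \<in> Gm" for x' y'
  proof -
    have bz: "proj_0 (br y' ?z) = br y' ?z"
        using br_Gm_Gp[OF that(2) proj_in(3)] proj_of_G0(2) by blast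
    have "plus_act z \<phi> (u @ [x', y']) = plus_act z \<phi> ((u @ [x']) @ [y'])" by simp
    also have "\<dots> = - plus_act z (rshift y' \<phi>) (u @ [x']) + even_act (br y' ?z) \<phi> (u @ [x'])"
      by (simp only: plus_act_snoc) (simp add: that proj_of_Gm(1))
    also have "\<dots> = plus_act z (rshift x' (rshift y' \<phi>)) u - even_act (br x' ?z) (rshift y' \<phi>) u
      + even_act (br y' ?z) (rshift x' \<phi>) u + \<phi> (map proj_m u @ [br x' (br y' ?z)])"
      by (simp add: plus_act_snoc even_act_snoc rshift_def that proj_of_Gm(1) bz)
    finally show ?thesis .
  qed
  have yy: "rshift x (rshift y \<phi>) = (\<lambda>w. - rshift y (rshift x \<phi>) w)"
    by (rule ext) (simp add: rshift_def alt_form_swap[OF Nil.prems xy, of _ "[]", simplified])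
  have A: "plus_act z (rshift x (rshift y \<phi>)) u = - plus_act z (rshift y (rshift x \<phi>)) u"
    by (simp only: yy plus_act_minus)
  have j: "br x (br y ?z) = - br y (br x ?z)"
    using jacobi_odd[OF proj_of_Gm(2)[OF xy(1)] proj_of_Gm(2)[OF xy(2)] homog_Gp[OF proj_in(3)]]
        br_Gm_Gm[OF xy] by simp
  have P: "\<phi> (map proj_m u @ [br x (br y ?z)]) = - \<phi> (map proj_m u @ [br y (br x ?z)])"
    using alt_form_minus[OF Nil.prems, of "map proj_m u" _ "[]"] j by simp
  show ?case using e[OF xy] e[OF xy(2,1)] A P by simp
next
  case (snoc t r)
  have IH: "plus_act z (rshift (proj_m t) \<phi>) (u @ [x, y] @ r)
      = - plus_act z (rshift (proj_m t) \<phi>) (u @ [y, x] @ r)"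
    by (rule snoc.IH[OF alt_form_rshift[OF snoc.prems]])
  have H: "even_act (br (proj_m t) (proj_p z)) \<phi> (u @ [x, y] @ r)
      = - even_act (br (proj_m t) (proj_p z)) \<phi> (u @ [y, x] @ r)"
    by (rule alt_form_swap[OF alt_form_even_act[OF snoc.prems] xy])
  have s2: "plus_act z \<phi> (u @ [x', y'] @ r @ [t])
      = - plus_act z (rshift (proj_m t) \<phi>) (u @ [x', y'] @ r)
          + even_act (br (proj_m t) (proj_p z)) \<phi> (u @ [x', y'] @ r)" for x' y'
    using plus_act_snoc[of z \<phi> "u @ [x', y'] @ r" t] by simp
  show ?case using s2[of x y] s2[of y x] IH H by simp
qed

lemma alt_form_plus_act: "alt_form \<phi> \<Longrightarrow> alt_form (plus_act z \<phi>)"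
  by (rule alt_formI[OF plus_act_linear plus_act_swap_Gm plus_act_map_proj])

lemma rshift_plus_act: "rshift y (plus_act z \<phi>) = (\<lambda>w. - plus_act z (rshift (proj_m y) \<phi>) w
        + even_act (br (proj_m y) (proj_p z)) \<phi> w)"
  by (rule ext) (simp add: rshift_def plus_act_snoc)

lemma even_plus_commutator:
  assumes h: "h \<in> G0" and z: "z \<in> Gp" and ph: "alt_form \<phi>"
  shows "even_act h (plus_act z \<phi>) = (\<lambda>w. plus_act z (even_act h \<phi>) w + plus_act (br h z) \<phi> w)"
proof (rule alt_form_eqI)
  show "alt_form (even_act h (plus_act z \<phi>))"
      by (rule alt_form_even_act[OF alt_form_plus_act[OF ph]])
  show "alt_form (\<lambda>w. plus_act z (even_act h \<phi>) w + plus_act (br h z) \<phi> w)"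
      by (rule alt_form_add_fun[OF alt_form_plus_act[OF alt_form_even_act[OF ph]]
          alt_form_plus_act[OF ph]])
  have hz: "br h z \<in> Gp" using br_G0_Gp h z by blast
  have proj_p: "proj_p z = z" "proj_p (br h z) = br h z" using proj_of_Gp(3) z hz by auto
  have pzh: "proj_0 h = h" using proj_of_G0(2) h by blast
  fix w assume "set w \<subseteq> Gm"
  then show "even_act h (plus_act z \<phi>) w = plus_act z (even_act h \<phi>) w + plus_act (br h z) \<phi> w"
    using ph
  proof (induction w arbitrary: \<phi> rule: rev_induct)
    case Nil
    then show ?case by (simp add: pzh rho_zero h)
  next
    case (snoc y w)
    have ym: "y \<in> Gm" and wm: "set w \<subseteq> Gm" using snoc.prems by auto
    note p = snoc.prems(2)
    have pmy: "proj_m y = y" using proj_of_Gm(1) ym by blast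
    have mw: "map proj_m w = w" using map_proj_m_Gm wm by blast
    have byh: "br y h \<in> Gm" using br_Gm_G0 h ym by auto
    have byz: "br y z \<in> G0" using br_Gm_Gp ym z by auto
    have ppb: "proj_p (br y h) = 0" "proj_m (br y h) = br y h"
        using proj_of_Gm(3) proj_of_Gm(1) byh by auto
    have e1: "even_act h (plus_act z \<phi>) (w @ [y])
        = - even_act h (plus_act z (rshift y \<phi>)) w + even_act h (even_act (br y z) \<phi>) w
            - plus_act z (rshift (br y h) \<phi>) w + even_act (br (br y h) z) \<phi> w"
    proof -
      have "even_act h (plus_act z \<phi>) (w @ [y])
          = even_act h (rshift y (plus_act z \<phi>)) w + plus_act z \<phi> (w @ [br y h])"
        by (simp add: even_act_snoc pmy mw pzh)
      also have "\<dots> = - even_act h (plus_act z (rshift y \<phi>)) w + even_act h (even_act (br y z) \<phi>) w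
        - plus_act z (rshift (br y h) \<phi>) w + even_act (br (br y h) z) \<phi> w"
        by (simp add: rshift_plus_act even_act_add even_act_minus even_act_diff plus_act_snoc pmy
            proj_p ppb)
      finally show ?thesis .
    qed
    have e2: "plus_act z (even_act h \<phi>) (w @ [y])
        = - plus_act z (even_act h (rshift y \<phi>)) w - plus_act z (rshift (br y h) \<phi>) w
            + even_act (br y z) (even_act h \<phi>) w"
      by (simp add: plus_act_snoc rshift_even_act[OF p] plus_act_add pmy proj_p pzh)
    have e3: "plus_act (br h z) \<phi> (w @ [y])
        = - plus_act (br h z) (rshift y \<phi>) w + even_act (br y (br h z)) \<phi> w"
      by (simp add: plus_act_snoc pmy proj_p)
    have IH: "even_act h (plus_act z (rshift y \<phi>)) w
        = plus_act z (even_act h (rshift y \<phi>)) w + plus_act (br h z) (rshift y \<phi>) w"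
      using snoc.IH[OF wm alt_form_rshift[OF p]] .
    have hh: "even_act h (even_act (br y z) \<phi>) w
        = even_act (br y z) (even_act h \<phi>) w + even_act (br h (br y z)) \<phi> w"
      using even_act_commutator[OF h byz p] by metis
    have j: "br h (br y z) + br (br y h) z = br y (br h z)" by (rule jacobi_G0_Gm_Gp[OF h ym z])
    have J: "even_act (br h (br y z)) \<phi> w + even_act (br (br y h) z) \<phi> w
        = even_act (br y (br h z)) \<phi> w"
      using even_act_param_add[OF p, of "br h (br y z)" "br (br y h) z" w] j by simp
    show ?case unfolding e1 e2 e3 IH hh J[symmetric] by (simp add: algebra_simps)
  qed
qed

lemma plus_act_anticomm:
  assumes z: "z \<in> Gp" "z' \<in> Gp" and ph: "alt_form \<phi>"
  shows "plus_act z (plus_act z' \<phi>) = (\<lambda>w. - plus_act z' (plus_act z \<phi>) w)"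
proof (rule alt_form_eqI)
  show "alt_form (plus_act z (plus_act z' \<phi>))"
      by (rule alt_form_plus_act[OF alt_form_plus_act[OF ph]])
  show "alt_form (\<lambda>w. - plus_act z' (plus_act z \<phi>) w)"
      by (rule alt_form_minus_fun[OF alt_form_plus_act[OF alt_form_plus_act[OF ph]]])
  have proj_p: "proj_p z = z" "proj_p z' = z'" using proj_of_Gp(3) z by auto
  fix w assume "set w \<subseteq> Gm"
  then show "plus_act z (plus_act z' \<phi>) w = - plus_act z' (plus_act z \<phi>) w"
    using ph
  proof (induction w arbitrary: \<phi> rule: rev_induct)
    case Nil
    then show ?case by simp
  next
    case (snoc y w)
    have ym: "y \<in> Gm" and wm: "set w \<subseteq> Gm" using snoc.prems by auto
    note p = snoc.prems(2)
    have pmy: "proj_m y = y" using proj_of_Gm(1) ym by blast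
    have e: "plus_act z (plus_act z' \<phi>) (w @ [y])
        = plus_act z (plus_act z' (rshift y \<phi>)) w - plus_act z (even_act (br y z') \<phi>) w
         + even_act (br y z) (plus_act z' \<phi>) w" if "proj_p z = z" "proj_p z' = z'" for z z'
      by (simp add: plus_act_snoc rshift_plus_act plus_act_add plus_act_minus plus_act_diff pmy
          that)
    have IH: "plus_act z (plus_act z' (rshift y \<phi>)) w = - plus_act z' (plus_act z (rshift y \<phi>)) w"
      using snoc.IH[OF wm alt_form_rshift[OF p]] .
    have b: "br y z \<in> G0" "br y z' \<in> G0" using br_Gm_Gp ym z by auto
    have h1: "even_act (br y z) (plus_act z' \<phi>) w
        = plus_act z' (even_act (br y z) \<phi>) w + plus_act (br (br y z) z') \<phi> w"
      using even_plus_commutator[OF b(1) z(2) p] by metis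
    have h2: "even_act (br y z') (plus_act z \<phi>) w
        = plus_act z (even_act (br y z') \<phi>) w + plus_act (br (br y z') z) \<phi> w"
      using even_plus_commutator[OF b(2) z(1) p] by metis
    have j: "br (br y z) z' = - br (br y z') z" by (rule jacobi_Gm_Gp_Gp[OF ym z])
    have J: "plus_act (br (br y z) z') \<phi> w = - plus_act (br (br y z') z) \<phi> w"
      using plus_act_param_minus[OF p] j by simp
    show ?case unfolding e[OF proj_p] e[OF proj_p(2,1)] IH h1 h2 J by (simp add: algebra_simps)
  qed
qed

definition form_act :: "'g \<Rightarrow> ('g, 'v) word_fun \<Rightarrow> ('g, 'v) word_fun" where
  "form_act x \<phi> = (\<lambda>w. rshift (proj_m x) \<phi> w + even_act x \<phi> w + plus_act x \<phi> w)"

lemma alt_form_form_act: "alt_form \<phi> \<Longrightarrow> alt_form (form_act x \<phi>)"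
  unfolding form_act_def
  by (rule alt_form_add_fun[OF alt_form_add_fun[OF alt_form_rshift alt_form_even_act]
      alt_form_plus_act, simplified])

lemma form_act_lincomb: "form_act x (lincomb a \<phi> b \<psi>) = lincomb a (form_act x \<phi>) b (form_act x \<psi>)"
  by (rule ext) (simp add: form_act_def rshift_lincomb even_act_lincomb plus_act_lincomb
      lincomb_apply V.scale_right_distrib add_ac)

lemma form_act_param: "alt_form \<phi> \<Longrightarrow> form_act (sc a x + sc b y) \<phi>
        = lincomb a (form_act x \<phi>) b (form_act y \<phi>)"
  by (rule ext) (simp add: form_act_def proj_linear rshift_param even_act_param plus_act_param
      lincomb_apply V.scale_right_distrib add_ac)

lemma form_act_G0: "x \<in> G0 \<Longrightarrow> alt_form \<phi> \<Longrightarrow> form_act x \<phi> = even_act x \<phi>"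
proof (rule ext)
  fix w assume a: "x \<in> G0" "alt_form \<phi>"
  have "plus_act x \<phi> w = 0"
      using plus_act_proj[of x] proj_of_G0(3)[OF a(1)] plus_act_param_zero[OF a(2)] by metis
  then show "form_act x \<phi> w = even_act x \<phi> w"
      using proj_of_G0(1)[OF a(1)] rshift_zero_apply[OF a(2)] by (simp add: form_act_def)
qed

lemma form_act_odd: "proj_0 x = 0 \<Longrightarrow> alt_form \<phi> \<Longrightarrow> form_act x \<phi>
        = (\<lambda>w. rshift (proj_m x) \<phi> w + plus_act (proj_p x) \<phi> w)"
proof (rule ext)
  fix w assume a: "proj_0 x = 0" "alt_form \<phi>"
  have "even_act x \<phi> w = 0" using even_act_proj[of x] a even_act_param_zero by metis
  then show "form_act x \<phi> w = rshift (proj_m x) \<phi> w + plus_act (proj_p x) \<phi> w"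
      by (simp add: form_act_def plus_act_proj)
qed

lemma form_act_Gm: "x \<in> Gm \<Longrightarrow> alt_form \<phi> \<Longrightarrow> form_act x \<phi> = rshift x \<phi>"
proof (rule ext)
  fix w assume a: "x \<in> Gm" "alt_form \<phi>"
  have "plus_act x \<phi> w = 0"
      using plus_act_proj[of x] proj_of_Gm(3)[OF a(1)] plus_act_param_zero[OF a(2)] by metis
  moreover have "even_act x \<phi> w = 0"
      using even_act_proj[of x] proj_of_Gm(2)[OF a(1)] even_act_param_zero[OF a(2)] by metis
  ultimately show "form_act x \<phi> w = rshift x \<phi> w"
      using proj_of_Gm(1)[OF a(1)] by (simp add: form_act_def)
qed

lemma form_act_rel_even_odd:
  assumes x0: "x \<in> G0" and pzy: "proj_0 y = 0" and p: "alt_form \<phi>"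
  shows "form_act x (form_act y \<phi>) w = form_act y (form_act x \<phi>) w + form_act (br x y) \<phi> w"
proof -
  let ?m = "proj_m y" and ?p = "proj_p y"
  have m: "?m \<in> Gm" and pp: "?p \<in> Gp" using proj_in by auto
  have b1: "br x ?m \<in> Gm" "br x ?p \<in> Gp" using br_G0_Gm br_G0_Gp x0 m pp by auto
  have bxy: "br x y = br x ?m + br x ?p" using odd_decomp[OF pzy] br_add_right by metis
  have pzb: "proj_0 (br x y) = 0" using bxy b1 by (simp add: proj_add proj_of_Gm(2) proj_of_Gp(2))
  have pmb: "proj_m (br x y) = br x ?m" and ppb: "proj_p (br x y) = br x ?p"
    using bxy b1 by (simp_all add: proj_add proj_of_Gm(1) proj_of_Gp(1) proj_of_Gm(3) proj_of_Gp(3))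
  have "form_act x (form_act y \<phi>) w
      = even_act x (rshift ?m \<phi>) w + plus_act ?p (even_act x \<phi>) w + plus_act (br x ?p) \<phi> w"
    using form_act_G0[OF x0 alt_form_form_act[OF p, of y]] form_act_odd[OF pzy p]
      even_plus_commutator[OF x0 pp p]
    by (simp add: even_act_add proj_of_Gp(3)[OF pp])
  moreover have "form_act y (form_act x \<phi>) w
      = even_act x (rshift ?m \<phi>) w - rshift (br x ?m) \<phi> w + plus_act ?p (even_act x \<phi>) w"
    using form_act_G0[OF x0 p] form_act_odd[OF pzy alt_form_even_act[OF p]]
        rshift_even_act[OF p, of ?m x]
      antisym_even[OF x0 homog_Gm[OF m]] rshift_minus[OF p]
    by (simp add: proj_of_Gm(1)[OF m] proj_of_G0(2)[OF x0])
  moreover have "form_act (br x y) \<phi> w = rshift (br x ?m) \<phi> w + plus_act (br x ?p) \<phi> w"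
    using form_act_odd[OF pzb p] pmb ppb by simp
  ultimately show ?thesis by (simp add: algebra_simps)
qed

lemma form_act_rel_odd_even:
  assumes pzx: "proj_0 x = 0" and y0: "y \<in> G0" and p: "alt_form \<phi>"
  shows "form_act x (form_act y \<phi>) w = form_act y (form_act x \<phi>) w + form_act (br x y) \<phi> w"
proof -
  let ?xm = "proj_m x" and ?xp = "proj_p x"
  have xm: "?xm \<in> Gm" and xp: "?xp \<in> Gp" using proj_in by auto
  have b1: "br ?xm y \<in> Gm" "br ?xp y \<in> Gp" using br_Gm_G0 br_Gp_G0 y0 xm xp by auto
  have bxy: "br x y = br ?xm y + br ?xp y" using odd_decomp[OF pzx] br_add_left by metis
  have pzb: "proj_0 (br x y) = 0" using bxy b1 by (simp add: proj_add proj_of_Gm(2) proj_of_Gp(2))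
  have pmb: "proj_m (br x y) = br ?xm y" and ppb: "proj_p (br x y) = br ?xp y"
    using bxy b1 by (simp_all add: proj_add proj_of_Gm(1) proj_of_Gp(1) proj_of_Gm(3) proj_of_Gp(3))
  have "form_act x (form_act y \<phi>) w
      = even_act y (rshift ?xm \<phi>) w + rshift (br ?xm y) \<phi> w + plus_act ?xp (even_act y \<phi>) w"
    using form_act_G0[OF y0 p] form_act_odd[OF pzx alt_form_even_act[OF p]]
        rshift_even_act[OF p, of ?xm y]
    by (simp add: proj_of_Gm(1)[OF xm] proj_of_G0(2)[OF y0])
  moreover have "form_act y (form_act x \<phi>) w
      = even_act y (rshift ?xm \<phi>) w + plus_act ?xp (even_act y \<phi>) w
          + plus_act (br y ?xp) \<phi> w"
    using form_act_G0[OF y0 alt_form_form_act[OF p, of x]] form_act_odd[OF pzx p]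
      even_plus_commutator[OF y0 xp p]
    by (simp add: even_act_add)
  moreover have "form_act (br x y) \<phi> w = rshift (br ?xm y) \<phi> w - plus_act (br y ?xp) \<phi> w"
    using form_act_odd[OF pzb p] pmb ppb antisym_even[OF y0 homog_Gp[OF xp]]
        plus_act_param_minus[OF p]
    by simp
  ultimately show ?thesis by (simp add: algebra_simps)
qed

lemma form_act_odd_odd_expand:
  assumes pzx: "proj_0 x = 0" and pzy: "proj_0 y = 0" and p: "alt_form \<phi>"
  shows "form_act x (form_act y \<phi>) w
      = rshift (proj_m x) (rshift (proj_m y) \<phi>) w - plus_act (proj_p y) (rshift (proj_m x) \<phi>) w
          + even_act (br (proj_m x) (proj_p y)) \<phi> w + plus_act (proj_p x) (rshift (proj_m y) \<phi>) w
          + plus_act (proj_p x) (plus_act (proj_p y) \<phi>) w"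
proof -
  have "form_act x (form_act y \<phi>) w
      = rshift (proj_m x) (form_act y \<phi>) w + plus_act (proj_p x) (form_act y \<phi>) w"
    using form_act_odd[OF pzx alt_form_form_act[OF p, of y]] by simp
  moreover have "rshift (proj_m x) (plus_act (proj_p y) \<phi>) w
      = - plus_act (proj_p y) (rshift (proj_m x) \<phi>) w + even_act (br (proj_m x) (proj_p y)) \<phi> w"
    using fun_cong[OF rshift_plus_act[of "proj_m x" "proj_p y" \<phi>], of w] by simp
  ultimately show ?thesis
    unfolding form_act_odd[OF pzy p] rshift_add plus_act_add by simp
qed

lemma form_act_rel_odd_odd:
  assumes pzx: "proj_0 x = 0" and pzy: "proj_0 y = 0" and p: "alt_form \<phi>"
  shows "form_act x (form_act y \<phi>) w = - form_act y (form_act x \<phi>) w + form_act (br x y) \<phi> w"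
proof -
  let ?xm = "proj_m x" and ?xp = "proj_p x" and ?ym = "proj_m y" and ?yp = "proj_p y"
  have xm: "?xm \<in> Gm" and xp: "?xp \<in> Gp" and ym: "?ym \<in> Gm" and yp: "?yp \<in> Gp"
    using proj_in by auto
  have "br x y = br (?xm + ?xp) (?ym + ?yp)" using odd_decomp[OF pzx] odd_decomp[OF pzy] by simp
  then have bxy: "br x y = br ?xm ?yp + br ?xp ?ym"
    unfolding br_add_left br_add_right br_Gm_Gm[OF xm ym] br_Gp_Gp[OF xp yp] by simp
  have "br ?xm ?yp \<in> G0" "br ?xp ?ym \<in> G0" using br_Gm_Gp br_Gp_Gm xm xp ym yp by auto
  then have "form_act (br x y) \<phi> w = even_act (br ?xm ?yp) \<phi> w + even_act (br ?xp ?ym) \<phi> w"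
    using form_act_G0[OF _ p, of "br x y"] bxy even_act_param_add[OF p]
        G.subspace_add[OF subspace_G0]
    by simp
  moreover have "br ?ym ?xp = br ?xp ?ym"
    using symm_odd[OF proj_of_Gm(2)[OF ym] proj_of_Gp(2)[OF xp]] .
  moreover have "rshift ?xm (rshift ?ym \<phi>) w = - rshift ?ym (rshift ?xm \<phi>) w"
    by (rule rshift_anticomm[OF xm ym p])
  moreover have "plus_act ?xp (plus_act ?yp \<phi>) w = - plus_act ?yp (plus_act ?xp \<phi>) w"
    using plus_act_anticomm[OF xp yp p] by metis
  ultimately show ?thesis
    unfolding form_act_odd_odd_expand[OF pzx pzy p] form_act_odd_odd_expand[OF pzy pzx p]
    by (simp add: algebra_simps)
qed

lemma form_act_rel:
  assumes hx: "is_homog x" and hy: "is_homog y" and p: "alt_form \<phi>"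
  shows "form_act x (form_act y \<phi>)
      = lincomb (ssign G0 x y) (form_act y (form_act x \<phi>)) 1 (form_act (br x y) \<phi>)"
proof (rule ext)
  fix w
  consider "x \<in> G0" "y \<in> G0" | "x \<in> G0" "proj_0 y = 0" "y \<notin> G0" | "proj_0 x = 0" "x \<notin> G0" "y \<in> G0"
    | "proj_0 x = 0" "proj_0 y = 0" "x \<notin> G0" "y \<notin> G0"
    using hx hy by (auto simp: homog_iff)
  then show "form_act x (form_act y \<phi>) w
      = lincomb (ssign G0 x y) (form_act y (form_act x \<phi>)) 1 (form_act (br x y) \<phi>) w"
  proof cases
    case 1
    have "form_act x (form_act y \<phi>) w = even_act x (even_act y \<phi>) w"
      using form_act_G0[OF 1(1) alt_form_even_act[OF p]] form_act_G0[OF 1(2) p] by simp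
    also have "\<dots> = even_act y (even_act x \<phi>) w + even_act (br x y) \<phi> w"
      using even_act_commutator[OF 1 p] by metis
    also have "\<dots> = form_act y (form_act x \<phi>) w + form_act (br x y) \<phi> w"
      using form_act_G0[OF 1(2) alt_form_even_act[OF p]] form_act_G0[OF 1(1) p]
        form_act_G0[OF br_G0_G0[OF 1] p] by simp
    finally show ?thesis using 1 by (simp add: lincomb_apply ssign_def)
  next
    case 2
    then show ?thesis using form_act_rel_even_odd[OF 2(1,2) p, of w]
        by (simp add: lincomb_apply ssign_def)
  next
    case 3
    then show ?thesis using form_act_rel_odd_even[OF 3(1,3) p, of w]
        by (simp add: lincomb_apply ssign_def)
  next
    case 4
    then show ?thesis using form_act_rel_odd_odd[OF 4(1,2) p, of w]
        by (simp add: lincomb_apply ssign_def)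
  qed
qed

definition act_word :: "'g list \<Rightarrow> ('g, 'v) word_fun \<Rightarrow> ('g, 'v) word_fun" where
  "act_word u \<phi> = foldr form_act u \<phi>"

lemma act_word_Nil [simp]: "act_word [] \<phi> = \<phi>" and act_word_Cons [simp]:
    "act_word (x # u) \<phi> = form_act x (act_word u \<phi>)"
  by (simp_all add: act_word_def)

lemma act_word_append: "act_word (u @ v) \<phi> = act_word u (act_word v \<phi>)"
  by (simp add: act_word_def)

lemma alt_form_act_word: "alt_form \<phi> \<Longrightarrow> alt_form (act_word u \<phi>)"
  by (induction u) (simp_all add: alt_form_form_act)

lemma act_word_lincomb: "act_word u (lincomb a \<phi> b \<psi>) = lincomb a (act_word u \<phi>) b (act_word u \<psi>)"
  by (induction u) (simp_all add: form_act_lincomb)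

definition degree0_form :: "'v \<Rightarrow> ('g, 'v) word_fun" where
  "degree0_form v = (\<lambda>w. if w = [] then v else 0)"

lemma alt_form_degree0: "alt_form (degree0_form v)"
  by (rule alt_formI) (auto simp: degree0_form_def)

definition lift :: "'v \<Rightarrow> ('g, 'v) word_fun" where
  "lift v = (\<lambda>u. act_word u (degree0_form v) [])"

lemma ug_hom_lift: "ug_hom (lift v)"
proof (rule ug_homI)
  fix u w x y
  let ?\<psi> = "act_word w (degree0_form v)"
  have p: "alt_form ?\<psi>" using alt_form_act_word alt_form_degree0 by blast
  have "form_act (x + y) ?\<psi> = lincomb 1 (form_act x ?\<psi>) 1 (form_act y ?\<psi>)"
      using form_act_param[OF p, of 1 x 1 y] by simp
  then show "lift v (u @ [x + y] @ w) = lift v (u @ [x] @ w) + lift v (u @ [y] @ w)"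
    by (simp add: lift_def act_word_append act_word_lincomb lincomb_apply)
next
  fix u w a x
  let ?\<psi> = "act_word w (degree0_form v)"
  have p: "alt_form ?\<psi>" using alt_form_act_word alt_form_degree0 by blast
  have "form_act (sc a x) ?\<psi> = lincomb a (form_act x ?\<psi>) 0 (form_act x ?\<psi>)"
      using form_act_param[OF p, of a x 0 x] by simp
  then show "lift v (u @ [sc a x] @ w) = scV a (lift v (u @ [x] @ w))"
    by (simp add: lift_def act_word_append act_word_lincomb lincomb_apply)
next
  fix u w x y assume h: "is_homog x" "is_homog y"
  let ?\<psi> = "act_word w (degree0_form v)"
  have p: "alt_form ?\<psi>" using alt_form_act_word alt_form_degree0 by blast
  show "lift v (u @ [x, y] @ w)
      = scV (ssign G0 x y) (lift v (u @ [y, x] @ w)) + lift v (u @ [br x y] @ w)"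
    using form_act_rel[OF h p]
        by (simp add: lift_def act_word_append act_word_lincomb lincomb_apply)
qed

lemma act_word_front: "alt_form \<psi> \<Longrightarrow> set p \<subseteq> G0 \<union> Gp \<Longrightarrow> act_word p \<psi> [] = wact G0 rho p (\<psi> [])"
proof (induction p)
  case Nil
  then show ?case by (simp add: wact_def)
next
  case (Cons x p)
  let ?\<chi> = "act_word p \<psi>"
  have c: "alt_form ?\<chi>" using alt_form_act_word Cons.prems by blast
  have IH: "?\<chi> [] = wact G0 rho p (\<psi> [])" using Cons by simp
  have e: "form_act x ?\<chi> [] = ?\<chi> [proj_m x] + rho (proj_0 x) (?\<chi> [])"
    by (simp add: form_act_def rshift_def)
  have w: "wact G0 rho (x # p) t = (if x \<in> G0 then rho x (wact G0 rho p t) else 0)" for t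
    by (simp add: wact_def)
  have x: "x \<in> G0 \<or> x \<in> Gp" using Cons.prems by auto
  have pm0: "proj_m x = 0" using x proj_of_G0(1) proj_of_Gp(1) by blast
  have z0: "?\<chi> [0] = 0" using alt_form_zero[OF c, of "[]" "[]"] by simp
  show ?case
  proof (cases "x \<in> G0")
    case True then show ?thesis using e IH pm0 z0 proj_of_G0(2)[OF True] w by simp
  next
    case False
    then have "proj_0 x = 0" using x proj_of_Gp(2) by blast
    then show ?thesis using e pm0 z0 False w rho_zero_left by simp
  qed
qed

lemma lift_in_M: "lift v \<in> M"
  unfolding M_iff
proof (intro conjI allI impI)
  show "ug_hom (lift v)" by (rule ug_hom_lift)
  fix p u assume "set p \<subseteq> G0 \<union> Gp"
  then show "lift v (p @ u) = wact G0 rho p (lift v u)"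
    using act_word_front[OF alt_form_act_word[OF alt_form_degree0]]
        by (simp add: lift_def act_word_append)
qed

lemma lift_Nil: "lift v [] = v"
  by (simp add: lift_def degree0_form_def)

lemma act_word_Gm: "set w \<subseteq> Gm \<Longrightarrow> alt_form \<psi> \<Longrightarrow> act_word w \<psi> = (\<lambda>u. \<psi> (u @ w))"
proof (induction w arbitrary: \<psi>)
  case Nil
  then show ?case by simp
next
  case (Cons x w)
  have "act_word (x # w) \<psi> = rshift x (act_word w \<psi>)"
      using form_act_Gm[OF _ alt_form_act_word[OF Cons.prems(2)]] Cons.prems by simp
  then show ?case using Cons by (simp add: rshift_def)
qed

lemma lift_Gm: "set w \<subseteq> Gm \<Longrightarrow> w \<noteq> [] \<Longrightarrow> lift v w = 0"
  using act_word_Gm[OF _ alt_form_degree0] by (simp add: lift_def degree0_form_def)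

end

section \<open>Vanishing on long words in \<open>\<gg>\<^sub>-\<^sub>1\<close>\<close>

context coind_setting
begin

lemma ug_hom_move_Gm:
  assumes f: "ug_hom f" and c: "c \<in> Gm" and w: "set w \<subseteq> Gm"
  shows "f (u @ [c] @ w @ r)
      = (if even (length w) then f (u @ w @ [c] @ r) else - f (u @ w @ [c] @ r))"
  using w
proof (induction w arbitrary: u)
  case Nil
  then show ?case by simp
next
  case (Cons a w)
  have "f (u @ [c] @ (a # w) @ r) = - f ((u @ [a]) @ [c] @ w @ r)"
    using ug_hom_swap_Gm[OF f c, of a u "w @ r"] Cons.prems by simp
  also have "\<dots> =
      - (if even (length w) then f ((u @ [a]) @ w @ [c] @ r) else - f ((u @ [a]) @ w @ [c] @ r))"
    using Cons.IH[of "u @ [a]"] Cons.prems by simp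
  finally show ?case by simp
qed

text \<open>The exterior-algebra argument: a letter of \<open>span (insert c C)\<close> is a
  multiple of \<open>c\<close> plus a letter of \<open>span C\<close>; the \<open>c\<close> can be moved to the
  front up to sign, and \<open>c c\<close> acts by zero.\<close>

lemma ug_hom_vanishes_span_insert:
  assumes f: "ug_hom f" and c: "c \<in> Gm" and C: "C \<subseteq> Gm"
    and IH: "\<And>u v w. set w \<subseteq> G.span C \<Longrightarrow> card C < length w \<Longrightarrow> f (u @ w @ v) = 0"
  shows "set xs \<subseteq> G.span C \<Longrightarrow> set ys \<subseteq> G.span (insert c C)
      \<Longrightarrow> (card C + 1 < length xs + length ys \<longrightarrow> f (u @ xs @ ys @ v) = 0)
          \<and> (card C < length xs + length ys \<longrightarrow> f (u @ [c] @ xs @ ys @ v) = 0)"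
proof (induction ys arbitrary: xs u)
  case Nil
  then show ?case using IH[of xs u v] IH[of xs "u @ [c]" v] by simp
next
  case (Cons y ys)
  obtain k where k: "y - sc k c \<in> G.span C"
    using Cons.prems(2) G.span_breakdown_eq by auto
  have xs: "set xs \<subseteq> Gm" using Cons.prems(1) C G.span_minimal subspace_Gm by blast
  have split: "f (p @ (y # ys) @ v) = scV k (f (p @ [c] @ ys @ v)) + f (p @ [y - sc k c] @ ys @ v)"
      for p
    using ug_hom_add[OF f, of p "sc k c" "y - sc k c" "ys @ v"]
        ug_hom_scale[OF f, of p k c "ys @ v"]
    by simp
  have IH_shorter: "(card C + 1 < length (xs @ [y - sc k c]) + length ys \<longrightarrow>
        f (p @ (xs @ [y - sc k c]) @ ys @ v) = 0) \<and>
      (card C < length (xs @ [y - sc k c]) + length ys \<longrightarrow>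
        f (p @ [c] @ (xs @ [y - sc k c]) @ ys @ v) = 0)" for p
    using Cons.IH[of "xs @ [y - sc k c]" p] Cons.prems k by simp
  have "f (u @ xs @ [c] @ ys @ v) = 0" if "card C + 1 < length xs + length (y # ys)"
    using Cons.IH[of xs u] Cons.prems that ug_hom_move_Gm[OF f c xs, of u "ys @ v"]
    by (auto split: if_splits)
  moreover have "f ((u @ [c]) @ xs @ [c] @ ys @ v) = 0"
    using ug_hom_square_Gm[OF f c, of u "xs @ ys @ v"]
        ug_hom_move_Gm[OF f c xs, of "u @ [c]" "ys @ v"]
    by (auto split: if_splits)
  ultimately show ?case
    using split[of "u @ xs"] split[of "u @ [c] @ xs"] IH_shorter[of u] by auto
qed

lemma ug_hom_vanishes_span:
  assumes f: "ug_hom f"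
  shows "finite C \<Longrightarrow> C \<subseteq> Gm \<Longrightarrow> set w \<subseteq> G.span C \<Longrightarrow> card C < length w \<Longrightarrow> f (u @ w @ v) = 0"
proof (induction C arbitrary: u v w rule: finite_induct)
  case empty
  then obtain w' where "w = 0 # w'" by (cases w) auto
  then show ?case using ug_hom_zero[OF f, of u "w' @ v"] by simp
next
  case (insert c C)
  have IH: "\<And>u v w. set w \<subseteq> G.span C \<Longrightarrow> card C < length w \<Longrightarrow> f (u @ w @ v) = 0"
    using insert.IH insert.prems(1) by blast
  have "set [] \<subseteq> G.span C" by simp
  from ug_hom_vanishes_span_insert[OF f _ _ IH this insert.prems(2)] insert.prems(1,3) insert.hyps
  show ?case by simp
qed

interpretation proj_m_hom: module_hom sc sc proj_m
  by unfold_locales (simp_all add: proj_add proj_scale)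

lemma Gm_finite_span: "\<exists>C. finite C \<and> C \<subseteq> Gm \<and> Gm \<subseteq> G.span C"
proof -
  obtain B where B: "finite B" "Godd Gm Gp \<subseteq> G.span B"
    using odd_fin by (auto simp: odd_part_finite_dim_def)
  have "Gm \<subseteq> G.span (proj_m ` B)"
  proof
    fix y assume y: "y \<in> Gm"
    then have "y \<in> Godd Gm Gp"
      using G.subspace_0[OF subspace_Gp] unfolding Godd_def by force
    then have "proj_m y \<in> proj_m ` G.span B" using B by blast
    then show "y \<in> G.span (proj_m ` B)" using proj_m_hom.span_image proj_of_Gm(1)[OF y] by simp
  qed
  moreover have "proj_m ` B \<subseteq> Gm" using proj_in by auto
  ultimately show ?thesis using B by blast
qed

lemma ug_hom_vanishes_long_Gm_words:
  assumes "ug_hom f"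
  obtains n where "\<And>w. set w \<subseteq> Gm \<Longrightarrow> n < length w \<Longrightarrow> f w = 0"
proof -
  obtain C where C: "finite C" "C \<subseteq> Gm" "Gm \<subseteq> G.span C" using Gm_finite_span by blast
  show ?thesis
    by (rule that[of "card C"])
        (use ug_hom_vanishes_span[OF assms C(1,2), of _ "[]" "[]"] C(3) in auto)
qed

end

section \<open>Submodules of the coinduced module\<close>

context coind_setting
begin

lemma lift_parity:
  assumes v: "v \<in> (if b then V1 else V0)"
  shows "has_par b (lift v)"
proof (rule has_parityI)
  let ?T = "\<lambda>c. if c = b then V0 else V1"
  fix u assume "homog_word u"
  have "lift v w \<in> ?T (word_odd G0 w)" if "set w \<subseteq> Gm" for w
  proof (cases "w = []")
    case True
    then show ?thesis using v lift_Nil by (cases b) simp_all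
  next
    case False
    then show ?thesis using lift_Gm[OF that False] V.subspace_0[OF subspace_V_parity] by simp
  qed
  moreover have "V.subspace (?T c)" for c using subspace_V_parity .
  moreover have "rho x w \<in> ?T c" if "x \<in> G0" "w \<in> ?T c" for x w c
    using that rho_V0 rho_V1 by (cases "c = b") simp_all
  ultimately show "lift v u \<in> ?T (word_odd G0 u)"
    using M_values_from_Gm_words[OF lift_in_M, of ?T] \<open>homog_word u\<close> by blast
qed

abbreviation submod :: "('g list \<Rightarrow> 'v) set \<Rightarrow> bool" where
  "submod N \<equiv> subsupermod Gm G0 Gp scV V0 V1 M N"

lemma submod_subset: "submod N \<Longrightarrow> N \<subseteq> M"
  and submod_fsubspace: "submod N \<Longrightarrow> fsubspace scV N"
  and submod_gact: "submod N \<Longrightarrow> f \<in> N \<Longrightarrow> gact x f \<in> N"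
  and submod_graded: "submod N \<Longrightarrow> f \<in> N \<Longrightarrow>
      \<exists>f0 f1. f0 \<in> N \<and> f1 \<in> N \<and> has_par False f0 \<and> has_par True f1 \<and> f = (\<lambda>u. f0 u + f1 u)"
  by (auto simp: subsupermod_def)

lemma fsubspace_zero: "fsubspace scV W \<Longrightarrow> (\<lambda>_. 0) \<in> W"
  and fsubspace_add: "fsubspace scV W \<Longrightarrow> f \<in> W \<Longrightarrow> g \<in> W \<Longrightarrow> (\<lambda>u. f u + g u) \<in> W"
  and fsubspace_scale: "fsubspace scV W \<Longrightarrow> f \<in> W \<Longrightarrow> (\<lambda>u. scV a (f u)) \<in> W"
  by (auto simp: fsubspace_def)

lemma foldr_gact_apply: "foldr gact w f u = f (u @ w)"
  by (induction w arbitrary: u) (auto simp: gact_def)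

lemma submod_foldr_gact: "submod N \<Longrightarrow> f \<in> N \<Longrightarrow> foldr gact w f \<in> N"
  by (induction w) (auto intro: submod_gact)

definition invariants :: "('g list \<Rightarrow> 'v) set" where
  "invariants = {f \<in> M. \<forall>y\<in>Gm. gact y f = (\<lambda>_. 0)}"

lemma invariant_in_M: "f \<in> invariants \<Longrightarrow> f \<in> M"
  by (simp add: invariants_def)

lemma invariant_snoc: "f \<in> invariants \<Longrightarrow> y \<in> Gm \<Longrightarrow> f (u @ [y]) = 0"
  unfolding invariants_def gact_def by (metis (mono_tags, lifting) mem_Collect_eq)

lemma invariant_Gm_word: "f \<in> invariants \<Longrightarrow> set w \<subseteq> Gm \<Longrightarrow> w \<noteq> [] \<Longrightarrow> f w = 0"
  by (cases w rule: rev_cases) (auto simp: invariant_snoc)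

lemma invariantI:
  assumes "f \<in> M" "\<And>w. set w \<subseteq> Gm \<Longrightarrow> w \<noteq> [] \<Longrightarrow> f w = 0"
  shows "f \<in> invariants"
  unfolding invariants_def
proof (intro CollectI conjI ballI)
  fix y assume "y \<in> Gm"
  then show "gact y f = (\<lambda>_. 0)"
    by (intro M_eq_zeroI[OF M_gact[OF assms(1)]]) (simp add: assms(2) gact_def)
qed (fact assms(1))

lemma invariant_zero: "(\<lambda>_. 0) \<in> invariants"
  by (rule invariantI[OF M_zero]) simp

lemma invariant_add: "f \<in> invariants \<Longrightarrow> g \<in> invariants \<Longrightarrow> (\<lambda>u. f u + g u) \<in> invariants"
  by (rule invariantI[OF M_add[OF invariant_in_M invariant_in_M]]) (simp_all add: invariant_Gm_word)

lemma invariant_scale: "f \<in> invariants \<Longrightarrow> (\<lambda>u. scV a (f u)) \<in> invariants"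
  by (rule invariantI[OF M_scale[OF invariant_in_M]]) (simp_all add: invariant_Gm_word)

lemma invariant_eqI:
  assumes "f \<in> invariants" "g \<in> invariants" "f [] = g []"
  shows "f = g"
proof (rule M_eqI[OF invariant_in_M[OF assms(1)] invariant_in_M[OF assms(2)]])
  fix w assume "set w \<subseteq> Gm"
  then show "f w = g w"
    using assms invariant_Gm_word[of f w] invariant_Gm_word[of g w] by (cases "w = []") auto
qed

lemma lift_invariant: "lift v \<in> invariants"
  using invariantI[OF lift_in_M] lift_Gm by blast

lemma invariants_nontrivial: "\<exists>f\<in>invariants. f \<noteq> (\<lambda>_. 0)"
proof -
  obtain v :: 'v where "v \<noteq> 0" using V_nontrivial by blast
  then have "lift v \<noteq> (\<lambda>_. 0)" using lift_Nil[of v] by metis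
  then show ?thesis using lift_invariant by blast
qed

text \<open>Apply to a nonzero \<open>f\<close> a longest word \<open>w\<^sub>0\<close> in \<open>\<gg>\<^sub>-\<^sub>1\<close>
  with \<open>f w\<^sub>0 \<noteq> 0\<close>; such words have bounded length since \<open>\<gg>\<^sub>-\<^sub>1\<close> is
  finite-dimensional.\<close>

lemma submod_has_invariant:
  assumes N: "submod N" "N \<noteq> {\<lambda>_. 0}"
  shows "\<exists>g\<in>N. g \<in> invariants \<and> g [] \<noteq> 0"
proof -
  obtain f where f: "f \<in> N" "f \<noteq> (\<lambda>_. 0)"
    using N fsubspace_zero[OF submod_fsubspace[OF N(1)]] by blast
  have fM: "f \<in> M" using f submod_subset[OF N(1)] by blast
  obtain n where n: "\<And>w. set w \<subseteq> Gm \<Longrightarrow> n < length w \<Longrightarrow> f w = 0"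
    using ug_hom_vanishes_long_Gm_words[OF M_ug_hom[OF fM]] by blast
  define K where "K = {length w | w. set w \<subseteq> Gm \<and> f w \<noteq> 0}"
  have "finite K" using n
      by (intro finite_subset[of K "{..n}"]) (auto simp: K_def not_less[symmetric])
  moreover have "K \<noteq> {}" using M_eq_zeroI[OF fM] f(2) by (auto simp: K_def)
  ultimately have "Max K \<in> K" by (rule Max_in)
  then obtain w0 where w0: "set w0 \<subseteq> Gm" "f w0 \<noteq> 0" "length w0 = Max K" by (auto simp: K_def)
  have "foldr gact w0 f \<in> invariants"
  proof (rule invariantI)
    show "foldr gact w0 f \<in> M" using submod_foldr_gact[OF N(1) f(1)] submod_subset[OF N(1)] by blast
    fix u assume u: "set u \<subseteq> Gm" "u \<noteq> []"
    have "length (u @ w0) \<notin> K"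
      using Max_ge[OF \<open>finite K\<close>] w0(3) u(2) by fastforce
    then show "foldr gact w0 f u = 0" using u w0(1) by (auto simp: foldr_gact_apply K_def)
  qed
  then show ?thesis
    using submod_foldr_gact[OF N(1) f(1)] w0(2) by (auto simp: foldr_gact_apply)
qed

lemma V_parity_sum_zero:
  assumes "(a \<in> V0 \<and> b \<in> V1) \<or> (a \<in> V1 \<and> b \<in> V0)" "a + b = 0"
  shows "a = 0 \<and> b = 0"
proof -
  have "a = scV (-1) b" using assms(2) by (simp add: eq_neg_iff_add_eq_0)
  then have "a \<in> V0 \<and> a \<in> V1" using assms(1) V.subspace_scale subspace_V0 subspace_V1 by metis
  then have "a = 0" using V0_V1_disjoint by blast
  then show ?thesis using assms(2) by simp
qed

context
  fixes N :: "('g list \<Rightarrow> 'v) set"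
  assumes N: "submod N"
begin

definition initial_values :: "'v set" where
  "initial_values = (\<lambda>F. F []) ` (N \<inter> invariants)"

lemma subspace_initial_values: "V.subspace initial_values"
  unfolding V.subspace_def initial_values_def
proof (intro conjI ballI allI)
  note fs = submod_fsubspace[OF N]
  show "0 \<in> (\<lambda>F. F []) ` (N \<inter> invariants)"
    using fsubspace_zero[OF fs] invariant_zero by force
  fix x y assume "x \<in> (\<lambda>F. F []) ` (N \<inter> invariants)" "y \<in> (\<lambda>F. F []) ` (N \<inter> invariants)"
  then obtain F G where "F \<in> N \<inter> invariants" "G \<in> N \<inter> invariants" "x = F []" "y = G []"
    by blast
  then show "x + y \<in> (\<lambda>F. F []) ` (N \<inter> invariants)"
    using fsubspace_add[OF fs] invariant_add by (intro image_eqI[where x = "\<lambda>u. F u + G u"]) auto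
next
  note fs = submod_fsubspace[OF N]
  fix c x assume "x \<in> (\<lambda>F. F []) ` (N \<inter> invariants)"
  then obtain F where "F \<in> N \<inter> invariants" "x = F []" by blast
  then show "scV c x \<in> (\<lambda>F. F []) ` (N \<inter> invariants)"
    using fsubspace_scale[OF fs] invariant_scale
        by (intro image_eqI[where x = "\<lambda>u. scV c (F u)"]) auto
qed

text \<open>\<open>x F\<close> is again invariant for \<open>x \<in> \<gg>\<^sub>0\<close> because
  \<open>[\<gg>\<^sub>-\<^sub>1, \<gg>\<^sub>0] \<subseteq> \<gg>\<^sub>-\<^sub>1\<close>.\<close>

lemma rho_initial_values: "x \<in> G0 \<Longrightarrow> w \<in> initial_values \<Longrightarrow> rho x w \<in> initial_values"
proof -
  assume x: "x \<in> G0" and "w \<in> initial_values"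
  then obtain F where F: "F \<in> N" "F \<in> invariants" "w = F []" by (auto simp: initial_values_def)
  have FM: "F \<in> M" using invariant_in_M F(2) .
  have "gact x F \<in> invariants"
  proof (rule invariantI[OF M_gact[OF FM]])
    fix u assume u: "set u \<subseteq> Gm" "u \<noteq> []"
    then obtain u' y where u': "u = u' @ [y]" by (cases u rule: rev_cases) auto
    have y: "y \<in> Gm" using u u' by auto
    have "gact x F u = scV (ssign G0 y x) (F (u' @ [x, y] @ [])) + F (u' @ [br y x] @ [])"
      using ug_hom_rel[OF M_ug_hom[OF FM] homog_Gm[OF y] homog_G0[OF x], of u' "[]"]
      by (simp add: gact_def u')
    then show "gact x F u = 0"
      using invariant_snoc[OF F(2) y, of "u' @ [x]"] invariant_snoc[OF F(2) br_Gm_G0[OF x y], of u']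
      by simp
  qed
  moreover have "gact x F [] = rho x w"
      using M_Cons_G0[OF FM x, of "[]"] F(3) by (simp add: gact_def)
  ultimately show "rho x w \<in> initial_values"
    using submod_gact[OF N F(1)]
        unfolding initial_values_def by (intro image_eqI[where x="gact x F"]) auto
qed

lemma initial_values_graded:
  assumes "w \<in> initial_values"
  shows "\<exists>a b. a \<in> initial_values \<inter> V0 \<and> b \<in> initial_values \<inter> V1 \<and> w = a + b"
proof -
  obtain F where F: "F \<in> N" "F \<in> invariants" "w = F []"
    using assms by (auto simp: initial_values_def)
  obtain F0 F1 where F01: "F0 \<in> N" "F1 \<in> N" "has_par False F0" "has_par True F1"
      "F = (\<lambda>u. F0 u + F1 u)"
    using submod_graded[OF N F(1)] by blast
  have "F0 u = 0 \<and> F1 u = 0" if u: "set u \<subseteq> Gm" "u \<noteq> []" for u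
  proof (rule V_parity_sum_zero)
    have hw: "homog_word u" using u(1) homog_Gm by blast
    show "(F0 u \<in> V0 \<and> F1 u \<in> V1) \<or> (F0 u \<in> V1 \<and> F1 u \<in> V0)"
      using has_parityD[OF F01(3) hw] has_parityD[OF F01(4) hw] by (cases "word_odd G0 u") auto
    show "F0 u + F1 u = 0" using invariant_Gm_word[OF F(2) u] F01(5) by metis
  qed
  then have "F0 \<in> invariants" "F1 \<in> invariants"
    using F01(1,2) submod_subset[OF N] by (auto intro!: invariantI)
  then have "F0 [] \<in> initial_values" "F1 [] \<in> initial_values"
    using F01(1,2) by (auto simp: initial_values_def)
  moreover have "F0 [] \<in> V0" "F1 [] \<in> V1"
    using has_parityD[OF F01(3), of "[]"] has_parityD[OF F01(4), of "[]"] by auto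
  ultimately show ?thesis using F(3) F01(5) by auto
qed

text \<open>The initial values of the invariants in a nonzero submodule form a nonzero graded
  \<open>\<gg>\<^sub>0\<close>-submodule of the simple module \<open>V\<close>, hence all of \<open>V\<close>.\<close>

lemma invariants_subset_submod:
  assumes "N \<noteq> {\<lambda>_. 0}"
  shows "invariants \<subseteq> N"
proof
  obtain g where "g \<in> N" "g \<in> invariants" "g [] \<noteq> 0" using submod_has_invariant[OF N assms] by blast
  then have "initial_values \<noteq> {0}" unfolding initial_values_def by force
  moreover have "\<forall>x\<in>G0. \<forall>w\<in>initial_values. rho x w \<in> initial_values"
    using rho_initial_values by blast
  moreover have "\<forall>w\<in>initial_values. \<exists>a b. a \<in> initial_values \<inter> V0 \<and> b \<in> initial_values \<inter> V1
      \<and> w = a + b"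
    using initial_values_graded by blast
  ultimately have all: "initial_values = UNIV"
    using V_simple[OF subspace_initial_values] by blast
  fix F assume F: "F \<in> invariants"
  have "F [] \<in> initial_values" using all by simp
  then obtain G where "G \<in> N" "G \<in> invariants" "G [] = F []" unfolding initial_values_def by auto
  then show "F \<in> N" using invariant_eqI[OF F] by metis
qed

end

definition graded_part :: "('g list \<Rightarrow> 'v) set" where
  "graded_part = {f. \<exists>f0 f1. f0 \<in> M \<and> f1 \<in> M \<and> has_par False f0 \<and> has_par True f1 \<and>
                          f = (\<lambda>u. f0 u + f1 u)}"

lemma graded_partI:
  "f0 \<in> M \<Longrightarrow> f1 \<in> M \<Longrightarrow> has_par False f0 \<Longrightarrow> has_par True f1 \<Longrightarrow> (\<lambda>u. f0 u + f1 u) \<in> graded_part"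
  unfolding graded_part_def by blast

lemma has_parity_gact_even: "x \<in> G0 \<Longrightarrow> has_par c f \<Longrightarrow> has_par c (gact x f)"
  using has_parity_gact[OF homog_G0, of x c f] by simp

lemma has_parity_gact_odd:
  assumes "proj_0 x = 0" "ug_hom f" "has_par c f"
  shows "has_par (\<not> c) (gact x f)"
proof (cases "x \<in> G0")
  case True
  then have "x = 0" using odd_in_G0 assms(1) by blast
  then have "gact x f = (\<lambda>_. 0)" using ug_hom_zero[OF assms(2), of _ "[]"] by (simp add: gact_def)
  then show ?thesis using has_parity_zero by simp
next
  case False
  then show ?thesis using has_parity_gact[of x c f] assms by (simp add: homog_iff)
qed

lemma graded_part_gact:
  assumes "f \<in> graded_part"
  shows "gact x f \<in> graded_part"
proof -
  obtain f0 f1 where f: "f0 \<in> M" "f1 \<in> M" "has_par False f0" "has_par True f1"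
      "f = (\<lambda>u. f0 u + f1 u)"
    using assms by (auto simp: graded_part_def)
  let ?e = "proj_0 x" and ?o = "proj_m x + proj_p x"
  have e: "?e \<in> G0" and o: "proj_0 ?o = 0" using proj_in by (auto simp: proj_add)
  have split: "gact x h u = gact ?e h u + gact ?o h u" if "ug_hom h" for h u
    using ug_hom_add[OF that, of u ?e ?o "[]"] proj_sum[of x] by (simp add: gact_def algebra_simps)
  have "gact x f u = (gact ?e f0 u + gact ?o f1 u) + (gact ?e f1 u + gact ?o f0 u)" for u
    using split[OF M_ug_hom[OF f(1)], of u] split[OF M_ug_hom[OF f(2)], of u] f(5)
    by (simp add: gact_def add_ac)
  then have "gact x f = (\<lambda>u. (gact ?e f0 u + gact ?o f1 u) + (gact ?e f1 u + gact ?o f0 u))"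
    by blast
  moreover have "(\<lambda>u. (gact ?e f0 u + gact ?o f1 u) + (gact ?e f1 u + gact ?o f0 u)) \<in> graded_part"
    using f M_gact M_ug_hom
    by (intro graded_partI M_add has_parity_add has_parity_gact_even[OF e]
        has_parity_gact_odd[OF o, where c = True, simplified]
            has_parity_gact_odd[OF o, where c = False, simplified])
      auto
  ultimately show ?thesis by simp
qed

lemma submod_graded_part: "submod graded_part"
  unfolding subsupermod_def
proof (intro conjI ballI allI)
  show "graded_part \<subseteq> M" using M_add by (auto simp: graded_part_def)
  show "fsubspace scV graded_part"
    unfolding fsubspace_def
  proof (intro conjI ballI allI)
    show "(\<lambda>_. 0) \<in> graded_part"
      using graded_partI[OF M_zero M_zero has_parity_zero has_parity_zero] by simp
  next
    fix f g assume "f \<in> graded_part" "g \<in> graded_part"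
    then obtain f0 f1 g0 g1 where d: "f0 \<in> M" "f1 \<in> M" "has_par False f0" "has_par True f1"
        "f = (\<lambda>u. f0 u + f1 u)" "g0 \<in> M" "g1 \<in> M" "has_par False g0" "has_par True g1"
            "g = (\<lambda>u. g0 u + g1 u)"
      by (auto simp: graded_part_def)
    have "(\<lambda>u. (f0 u + g0 u) + (f1 u + g1 u)) \<in> graded_part"
      using d by (intro graded_partI M_add has_parity_add)
    then show "(\<lambda>u. f u + g u) \<in> graded_part" using d(5,10) by (simp add: add_ac)
  next
    fix a f assume "f \<in> graded_part"
    then obtain f0 f1 where d: "f0 \<in> M" "f1 \<in> M" "has_par False f0" "has_par True f1"
        "f = (\<lambda>u. f0 u + f1 u)"
      by (auto simp: graded_part_def)
    have "(\<lambda>u. scV a (f0 u) + scV a (f1 u)) \<in> graded_part"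
      using d by (intro graded_partI M_scale has_parity_scale)
    then show "(\<lambda>u. scV a (f u)) \<in> graded_part" using d(5) by (simp add: V.scale_right_distrib)
  qed
next
  fix x f assume "f \<in> graded_part"
  then show "gact x f \<in> graded_part" by (rule graded_part_gact)
next
  fix f assume "f \<in> graded_part"
  then obtain f0 f1 where d: "f0 \<in> M" "f1 \<in> M" "has_par False f0" "has_par True f1"
      "f = (\<lambda>u. f0 u + f1 u)"
    by (auto simp: graded_part_def)
  moreover have "f0 \<in> graded_part" "f1 \<in> graded_part"
    using graded_partI[OF d(1) M_zero d(3) has_parity_zero]
        graded_partI[OF M_zero d(2) has_parity_zero d(4)]
    by simp_all
  ultimately show "\<exists>f0 f1. f0 \<in> graded_part \<and> f1 \<in> graded_part \<and> has_par False f0 \<and> has_par True f1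
      \<and> f = (\<lambda>u. f0 u + f1 u)"
    by blast
qed

lemma graded_part_nontrivial: "graded_part \<noteq> {\<lambda>_. 0}"
proof -
  obtain v :: 'v where v: "v \<noteq> 0" using V_nontrivial by blast
  obtain v0 v1 where v01: "v0 \<in> V0" "v1 \<in> V1" "v = v0 + v1" using V_decomp[of v] by blast
  have "(\<lambda>u. lift v0 u + lift v1 u) \<in> graded_part"
    using v01 by (intro graded_partI lift_in_M lift_parity) auto
  moreover have "(\<lambda>u. lift v0 u + lift v1 u) \<noteq> (\<lambda>_. 0)"
    using v v01 lift_Nil by (metis (no_types))
  ultimately show ?thesis by blast
qed

lemma parity_components_unique:
  assumes M: "f0 \<in> M" "g0 \<in> M" and par: "has_par False f0" "has_par False g0" "has_par True f1"
      "has_par True g1"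
    and eq: "\<And>u. f0 u + f1 u = g0 u + g1 u"
  shows "f0 = g0"
proof -
  have "homog_word u \<Longrightarrow> f0 u - g0 u = 0" for u
  proof -
    assume u: "homog_word u"
    have "f0 u - g0 u = g1 u - f1 u" using eq[of u] by (simp add: algebra_simps)
    moreover have "f0 u - g0 u \<in> (if word_odd G0 u then V1 else V0)"
      using V.subspace_diff[OF subspace_V_parity has_parityD[OF par(1) u] has_parityD[OF par(2) u]]
      by (cases "word_odd G0 u") simp_all
    moreover have "g1 u - f1 u \<in> (if word_odd G0 u then V0 else V1)"
      using V.subspace_diff[OF subspace_V_parity has_parityD[OF par(4) u] has_parityD[OF par(3) u]]
      by (cases "word_odd G0 u") simp_all
    ultimately have "f0 u - g0 u \<in> V0 \<and> f0 u - g0 u \<in> V1" by (cases "word_odd G0 u") auto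
    then show "f0 u - g0 u = 0" using V0_V1_disjoint by blast
  qed
  then have "f0 u - g0 u = 0" for u
    using ug_hom_eq_zeroI[OF ug_hom_lincomb[OF M_ug_hom[OF M(1)] M_ug_hom[OF M(2)], of 1 "-1"]]
    by (simp add: lincomb_diff)
  then show ?thesis by (metis eq_iff_diff_eq_0 ext)
qed

definition minimal_submod :: "('g list \<Rightarrow> 'v) set" where
  "minimal_submod = \<Inter>{N. submod N \<and> N \<noteq> {\<lambda>_. 0}}"

lemma minimal_submod_subset: "submod N \<Longrightarrow> N \<noteq> {\<lambda>_. 0} \<Longrightarrow> minimal_submod \<subseteq> N"
  unfolding minimal_submod_def by blast

lemma invariants_subset_minimal_submod: "invariants \<subseteq> minimal_submod"
  unfolding minimal_submod_def using invariants_subset_submod by blast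

lemma minimal_submod_nontrivial: "minimal_submod \<noteq> {\<lambda>_. 0}"
  using invariants_subset_minimal_submod invariants_nontrivial by blast

lemma fsubspace_minimal_submod: "fsubspace scV minimal_submod"
  unfolding fsubspace_def minimal_submod_def
  using fsubspace_zero[OF submod_fsubspace] fsubspace_add[OF submod_fsubspace]
    fsubspace_scale[OF submod_fsubspace]
  by blast

text \<open>The parity components of an element of every nonzero submodule lie in every nonzero
  submodule, since they are unique.\<close>

lemma minimal_submod_graded:
  assumes f: "f \<in> minimal_submod"
  shows "\<exists>f0 f1. f0 \<in> minimal_submod \<and> f1 \<in> minimal_submod \<and> has_par False f0 \<and> has_par True f1
      \<and> f = (\<lambda>u. f0 u + f1 u)"
proof -
  obtain f0 f1 where d: "f0 \<in> graded_part" "f1 \<in> graded_part" "has_par False f0" "has_par True f1"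
      "f = (\<lambda>u. f0 u + f1 u)"
    using submod_graded[OF submod_graded_part] f
      minimal_submod_subset[OF submod_graded_part graded_part_nontrivial] by blast
  have dM: "f0 \<in> M" "f1 \<in> M" using d submod_subset[OF submod_graded_part] by auto
  have "f0 \<in> N \<and> f1 \<in> N" if N: "submod N" "N \<noteq> {\<lambda>_. 0}" for N
  proof -
    obtain g0 g1 where g: "g0 \<in> N" "g1 \<in> N" "has_par False g0" "has_par True g1"
        "f = (\<lambda>u. g0 u + g1 u)"
      using submod_graded[OF N(1)] f minimal_submod_subset[OF N] by blast
    have e: "f0 u + f1 u = g0 u + g1 u" for u using d(5) g(5) by metis
    have "f0 = g0"
      using g submod_subset[OF N(1)]
          by (intro parity_components_unique[OF dM(1) _ d(3) g(3) d(4) g(4) e]) auto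
    moreover have "f1 = g1" using e calculation by (metis add_left_imp_eq ext)
    ultimately show ?thesis using g by simp
  qed
  then have "f0 \<in> minimal_submod" "f1 \<in> minimal_submod" unfolding minimal_submod_def by auto
  then show ?thesis using d by blast
qed

lemma submod_minimal_submod: "submod minimal_submod"
  unfolding subsupermod_def
proof (intro conjI ballI allI)
  show "minimal_submod \<subseteq> M"
    using minimal_submod_subset[OF submod_graded_part graded_part_nontrivial]
      submod_subset[OF submod_graded_part] by blast
  show "fsubspace scV minimal_submod" by (rule fsubspace_minimal_submod)
  fix x f assume "f \<in> minimal_submod"
  then show "gact x f \<in> minimal_submod" unfolding minimal_submod_def using submod_gact by blast
qed (rule minimal_submod_graded)

lemma simple_subsupermod_iff_minimal:
  "simple_subsupermod Gm G0 Gp scV V0 V1 M S \<longleftrightarrow> S = minimal_submod"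
proof
  assume S: "simple_subsupermod Gm G0 Gp scV V0 V1 M S"
  then have "submod S" "S \<noteq> {\<lambda>_. 0}" by (simp_all add: simple_subsupermod_def)
  then have "minimal_submod \<subseteq> S" by (rule minimal_submod_subset)
  then show "S = minimal_submod"
    using S submod_minimal_submod minimal_submod_nontrivial by (auto simp: simple_subsupermod_def)
next
  assume "S = minimal_submod"
  then show "simple_subsupermod Gm G0 Gp scV V0 V1 M S"
    using submod_minimal_submod minimal_submod_nontrivial minimal_submod_subset
    by (auto simp: simple_subsupermod_def)
qed

lemma has_simple_socle_Coind_Gp: "has_simple_socle Gm G0 Gp scV V0 V1 M"
proof -
  have "{S. simple_subsupermod Gm G0 Gp scV V0 V1 M S} = {minimal_submod}"
    using simple_subsupermod_iff_minimal by blast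
  then have "socle Gm G0 Gp scV V0 V1 M = minimal_submod"
    unfolding socle_def fspan_def using fsubspace_minimal_submod by auto
  then show ?thesis using simple_subsupermod_iff_minimal by (simp add: has_simple_socle_def)
qed

end

section \<open>Exchanging the roles of \<open>\<gg>\<^sub>1\<close> and \<open>\<gg>\<^sub>-\<^sub>1\<close>\<close>

lemma Godd_swap: "Godd Gm Gp = Godd Gp Gm"
  unfolding Godd_def by (auto; metis add.commute)

lemma homog_swap: "homog G0 Gm Gp = homog G0 Gp Gm"
  by (rule ext) (simp add: homog_def Godd_swap)

lemma (in coind_setting) Zgraded_lie_superalgebra_swap: "Zgraded_lie_superalgebra sc br Gp G0 Gm"
proof -
  have "\<exists>!t. fst t \<in> Gp \<and> fst (snd t) \<in> G0 \<and> snd (snd t) \<in> Gm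
      \<and> x = fst t + fst (snd t) + snd (snd t)" for x
  proof (rule ex1I[of _ "(proj_p x, proj_0 x, proj_m x)"])
    show "fst (proj_p x, proj_0 x, proj_m x) \<in> Gp \<and> fst (snd (proj_p x, proj_0 x, proj_m x)) \<in> G0 \<and>
        snd (snd (proj_p x, proj_0 x, proj_m x)) \<in> Gm \<and>
        x = fst (proj_p x, proj_0 x, proj_m x) + fst (snd (proj_p x, proj_0 x, proj_m x)) +
          snd (snd (proj_p x, proj_0 x, proj_m x))"
      using proj_in proj_sum[of x] by (simp add: add_ac)
    fix t
    assume "fst t \<in> Gp \<and> fst (snd t) \<in> G0 \<and> snd (snd t) \<in> Gm
        \<and> x = fst t + fst (snd t) + snd (snd t)"
    then show "t = (proj_p x, proj_0 x, proj_m x)"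
      using proj_unique[of "snd (snd t)" "fst (snd t)" "fst t" x] by (cases t) (auto simp: add_ac)
  qed
  then show ?thesis
    unfolding Zgraded_lie_superalgebra_def homog_swap[of G0 Gp Gm]
    by (intro conjI ballI allI impI)
      (auto intro: G.vector_space_axioms subspace_Gm subspace_G0 subspace_Gp br_add_left
          br_add_right
        br_scale_left br_scale_right br_G0_G0 br_G0_Gm br_Gm_G0 br_G0_Gp br_Gp_G0 br_Gm_Gp br_Gp_Gm
        br_Gm_Gm br_Gp_Gp br_super_antisym br_super_jacobi)
qed

lemma odd_part_finite_dim_swap: "odd_part_finite_dim sc Gm Gp = odd_part_finite_dim sc Gp Gm"
  by (simp add: odd_part_finite_dim_def Godd_swap)

lemma Coind_swap: "Coind sc br Gm G0 Gp scV rho K = Coind sc br Gp G0 Gm scV rho K"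
  by (simp add: Coind_def hom_Ug_def homog_swap[of G0 Gm Gp])

lemma has_simple_socle_swap: "has_simple_socle Gm G0 Gp = has_simple_socle Gp G0 Gm"
proof -
  have parity: "has_parity Gm G0 Gp = has_parity Gp G0 Gm"
    by (intro ext) (simp add: has_parity_def homog_swap[of G0 Gm Gp])
  have submod: "subsupermod Gm G0 Gp = subsupermod Gp G0 Gm"
    unfolding subsupermod_def parity ..
  show ?thesis
    unfolding has_simple_socle_def socle_def simple_subsupermod_def submod ..
qed

theorem corollary3p6:
  fixes sc :: "complex \<Rightarrow> 'g::ab_group_add \<Rightarrow> 'g" and br :: "'g \<Rightarrow> 'g \<Rightarrow> 'g"
    and Gm G0 Gp :: "'g set"
    and scV :: "complex \<Rightarrow> 'v::ab_group_add \<Rightarrow> 'v" and V0 V1 :: "'v set"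
    and rho :: "'g \<Rightarrow> 'v \<Rightarrow> 'v"
  assumes "Zgraded_lie_superalgebra sc br Gm G0 Gp"
    and "odd_part_finite_dim sc Gm Gp"
    and "simple_g0_supermodule sc br G0 scV V0 V1 rho"
  shows "has_simple_socle Gm G0 Gp scV V0 V1 (Coind sc br Gm G0 Gp scV rho Gp) \<and>
         has_simple_socle Gm G0 Gp scV V0 V1 (Coind sc br Gm G0 Gp scV rho Gm)"
proof
  interpret setting: coind_setting sc br Gm G0 Gp scV V0 V1 rho
    using assms by unfold_locales
  show "has_simple_socle Gm G0 Gp scV V0 V1 (Coind sc br Gm G0 Gp scV rho Gp)"
    by (rule setting.has_simple_socle_Coind_Gp)
  interpret swapped: coind_setting sc br Gp G0 Gm scV V0 V1 rho
    using setting.Zgraded_lie_superalgebra_swap assms(2,3) odd_part_finite_dim_swap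
    by unfold_locales auto
  show "has_simple_socle Gm G0 Gp scV V0 V1 (Coind sc br Gm G0 Gp scV rho Gm)"
    using swapped.has_simple_socle_Coind_Gp by (simp add: has_simple_socle_swap Coind_swap)
qed

end
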